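(* Suppose $|\psi\rangle = U|\phi\rangle$ for an $n$-qubit stabilizer state $|\phi\rangle$ and an $n$-qubit circuit $U$ with blowup $B$. For each integer $\ell\ge1$, if $B<(d_\ell(\psi)/\ell)^{1/2}$, then $\mathcal{C}_\ell(\psi) = U\,\mathcal{C}^{\mathrm{stab}}_{B\ell}(\phi)$.
   Context: For a circuit $U$ of one- and two-qubit gates, the backwards lightcone $\overleftarrow{L}(S)$ of a set $S$ of output qubits is the set of input qubits connected to some qubit of $S$ by a directed path through the gates, and the forward lightcone $\overrightarrow{L}(S)$ is the analogous set for paths in the reverse direction. The blowup of $U$ is the minimum integer $B$ such that $|\overleftarrow{L}(S)|,|\overrightarrow{L}(S)|\le B|S|$ for every $S\subseteq[n]$. For an $n$-qubit pure state $|\psi\rangle$ and integer $\ell$, $\mathcal{C}_\ell(\psi)$ is the span of all pure states $|\phi\rangle$ with $\phi_A=\psi_A$ for every $A\subseteq[n]$ with $|A|\le\ell$ (reduced density matrices). The distance $d(\mathcal{C})$ of a subspace $\mathcal{C}$ is the maximum $d$ such that for every region $A$ with $|A|<d$ there is a CPTP map $\mathrm{Rec}$ with $\mathrm{Rec}(\mathrm{tr}_A\phi)=\phi$ for all $|\phi\rangle\in\mathcal{C}$; $d_\ell(\psi):=d(\mathcal{C}_\ell(\psi))$. For a stabilizer state $|\phi\rangle$ with stabilizer group $\mathcal{S}$, $\mathcal{C}^{\mathrm{stab}}_\ell(\phi)$ is the subspace of states stabilized by all elements of $\mathcal{S}$ acting nontrivially on at most $\ell$ qubits. $U\mathcal{C}=\{U|\varphi\rangle:|\varphi\rangle\in\mathcal{C}\}$.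 *)

theory Defs
  imports Complex_Main "HOL-Library.Extended_Nat"
begin

text \<open>n-qubit Hilbert space: computational basis states are indexed by subsets
  b of {..<n} (the set of qubits in state 1). A vector is a function
  nat set => complex vanishing outside Pow {..<n}.\<close>

type_synonym vec = "nat set \<Rightarrow> complex"
type_synonym op = "nat set \<Rightarrow> nat set \<Rightarrow> complex"

definition is_state :: "nat \<Rightarrow> vec \<Rightarrow> bool" where
  "is_state n v \<longleftrightarrow> (\<forall>b. \<not> b \<subseteq> {..<n} \<longrightarrow> v b = 0)"

definition is_pure_state :: "nat \<Rightarrow> vec \<Rightarrow> bool" where
  "is_pure_state n v \<longleftrightarrow> is_state n v \<and> (\<Sum>b\<in>Pow {..<n}. (cmod (v b))\<^sup>2) = 1"

definition cspan :: "vec set \<Rightarrow> vec set" where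
  "cspan S = {w. \<exists>(k::nat) (c::nat \<Rightarrow> complex) (vs::nat \<Rightarrow> vec).
      (\<forall>i<k. vs i \<in> S) \<and> w = (\<lambda>b. \<Sum>i<k. c i * vs i b)}"

definition rdm :: "nat \<Rightarrow> nat set \<Rightarrow> vec \<Rightarrow> op" where
  "rdm n R v = (\<lambda>u w. if u \<subseteq> R \<and> w \<subseteq> R then
       (\<Sum>z\<in>Pow ({..<n} - R). v (u \<union> z) * cnj (v (w \<union> z))) else 0)"

definition ptrace :: "nat \<Rightarrow> nat set \<Rightarrow> vec \<Rightarrow> op" where
  "ptrace n A v = rdm n ({..<n} - A) v"

definition proj :: "nat \<Rightarrow> vec \<Rightarrow> op" where
  "proj n v = (\<lambda>x y. if x \<subseteq> {..<n} \<and> y \<subseteq> {..<n} then v x * cnj (v y) else 0)"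

text \<open>CPTP maps from operators on the qubits {..<n} - A to operators on {..<n},
  given in Kraus form: a finite family of operators K with sum K^dagger K = I.\<close>
definition is_kraus :: "nat \<Rightarrow> nat set \<Rightarrow> op list \<Rightarrow> bool" where
  "is_kraus n A Ks \<longleftrightarrow> (\<forall>u v. u \<subseteq> {..<n} - A \<and> v \<subseteq> {..<n} - A \<longrightarrow>
      sum_list (map (\<lambda>K. \<Sum>x\<in>Pow {..<n}. cnj (K x u) * K x v) Ks) = (if u = v then 1 else 0))"

definition kraus_apply :: "nat \<Rightarrow> nat set \<Rightarrow> op list \<Rightarrow> op \<Rightarrow> op" where
  "kraus_apply n A Ks \<rho> = (\<lambda>x y. if x \<subseteq> {..<n} \<and> y \<subseteq> {..<n} then
      sum_list (map (\<lambda>K. \<Sum>u\<in>Pow ({..<n} - A). \<Sum>w\<in>Pow ({..<n} - A).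
          K x u * \<rho> u w * cnj (K y w)) Ks) else 0)"

definition correctable :: "nat \<Rightarrow> vec set \<Rightarrow> nat \<Rightarrow> bool" where
  "correctable n C d \<longleftrightarrow> (\<forall>A. A \<subseteq> {..<n} \<and> card A < d \<longrightarrow>
      (\<exists>Ks. is_kraus n A Ks \<and> (\<forall>v\<in>C. kraus_apply n A Ks (ptrace n A v) = proj n v)))"

definition code_distance :: "nat \<Rightarrow> vec set \<Rightarrow> enat" where
  "code_distance n C = Sup {enat d | d. correctable n C d}"

definition local_code :: "nat \<Rightarrow> nat \<Rightarrow> vec \<Rightarrow> vec set" where
  "local_code n l \<psi> = cspan {\<phi>. is_pure_state n \<phi> \<and>
      (\<forall>A. A \<subseteq> {..<n} \<and> card A \<le> l \<longrightarrow> rdm n A \<phi> = rdm n A \<psi>)}"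

definition d_loc :: "nat \<Rightarrow> nat \<Rightarrow> vec \<Rightarrow> enat" where
  "d_loc n l \<psi> = code_distance n (local_code n l \<psi>)"

text \<open>Pauli operators i^k X^x Z^z, represented by (k, x, z) with k < 4, x, z subsets of {..<n}.\<close>
type_synonym pauli = "nat \<times> nat set \<times> nat set"

definition is_pauli :: "nat \<Rightarrow> pauli \<Rightarrow> bool" where
  "is_pauli n P \<longleftrightarrow> (case P of (k, x, z) \<Rightarrow> k < 4 \<and> x \<subseteq> {..<n} \<and> z \<subseteq> {..<n})"

definition pauli_apply :: "pauli \<Rightarrow> vec \<Rightarrow> vec" where
  "pauli_apply P v = (case P of (k, x, z) \<Rightarrow>
     (\<lambda>b. \<i> ^ k * (-1) ^ card (z \<inter> ((b - x) \<union> (x - b))) * v ((b - x) \<union> (x - b))))"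

definition pauli_weight :: "pauli \<Rightarrow> nat" where
  "pauli_weight P = (case P of (k, x, z) \<Rightarrow> card (x \<union> z))"

definition stab_group :: "nat \<Rightarrow> vec \<Rightarrow> pauli set" where
  "stab_group n v = {P. is_pauli n P \<and> pauli_apply P v = v}"

definition is_stabilizer_state :: "nat \<Rightarrow> vec \<Rightarrow> bool" where
  "is_stabilizer_state n v \<longleftrightarrow> is_pure_state n v \<and> card (stab_group n v) = 2 ^ n"

definition stab_code :: "nat \<Rightarrow> nat \<Rightarrow> vec \<Rightarrow> vec set" where
  "stab_code n l \<phi> = {v. is_state n v \<and>
      (\<forall>P\<in>stab_group n \<phi>. pauli_weight P \<le> l \<longrightarrow> pauli_apply P v = v)}"

text \<open>Circuits: lists of gates (Q, G), Q the set of 1 or 2 qubits acted on, G a unitary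
  matrix indexed by subsets of Q. The first gate of the list is applied first.\<close>
type_synonym gate = "nat set \<times> op"

definition is_gate :: "nat \<Rightarrow> gate \<Rightarrow> bool" where
  "is_gate n g \<longleftrightarrow> (case g of (Q, G) \<Rightarrow> Q \<subseteq> {..<n} \<and> (card Q = 1 \<or> card Q = 2) \<and>
     (\<forall>x y. x \<subseteq> Q \<and> y \<subseteq> Q \<longrightarrow>
        (\<Sum>w\<in>Pow Q. cnj (G w x) * G w y) = (if x = y then 1 else 0)))"

definition gate_apply :: "gate \<Rightarrow> vec \<Rightarrow> vec" where
  "gate_apply g v = (case g of (Q, G) \<Rightarrow>
     (\<lambda>b. \<Sum>y\<in>Pow Q. G (b \<inter> Q) y * v ((b - Q) \<union> y)))"

definition circuit_apply :: "gate list \<Rightarrow> vec \<Rightarrow> vec" where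
  "circuit_apply U v = fold gate_apply U v"

definition lc_step :: "gate \<Rightarrow> nat set \<Rightarrow> nat set" where
  "lc_step g S = (if fst g \<inter> S \<noteq> {} then S \<union> fst g else S)"

fun back_lc :: "gate list \<Rightarrow> nat set \<Rightarrow> nat set" where
  "back_lc [] S = S"
| "back_lc (g # gs) S = lc_step g (back_lc gs S)"

fun fwd_lc :: "gate list \<Rightarrow> nat set \<Rightarrow> nat set" where
  "fwd_lc [] S = S"
| "fwd_lc (g # gs) S = fwd_lc gs (lc_step g S)"

definition blowup :: "nat \<Rightarrow> gate list \<Rightarrow> nat" where
  "blowup n U = (LEAST B. \<forall>S. S \<subseteq> {..<n} \<longrightarrow>
      card (back_lc U S) \<le> B * card S \<and> card (fwd_lc U S) \<le> B * card S)"

end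

theory Submission
  imports Defs
begin

text \<open>Write \<open>\<psi> = U \<phi>\<close>, \<open>B\<close> for the blowup and \<open>m = B l\<close>. A region \<open>A\<close> of the output only sees
  the backward lightcone of \<open>A\<close>, so a state agreeing with \<open>\<phi>\<close> on all regions of size \<open>m\<close> is mapped
  by \<open>U\<close> to one agreeing with \<open>\<psi>\<close> on all regions of size \<open>l\<close>; dually, forward lightcones show that
  \<open>U\<^sup>\<dagger>\<close> maps states agreeing with \<open>\<psi>\<close> on regions of size \<open>B m = B\<^sup>2 l\<close> to states agreeing with \<open>\<phi>\<close>
  on regions of size \<open>m\<close>. As \<open>B\<^sup>2 l < d\<^sub>l(\<psi>)\<close>, the Knill--Laflamme condition makes every unit
  vector of \<open>C\<^sub>l(\<psi>)\<close> agree with \<open>\<psi>\<close> on regions of size \<open>B\<^sup>2 l\<close>.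

  It remains to see that agreeing with \<open>\<phi>\<close> on regions of size \<open>m\<close> means being fixed by the
  stabilizers of weight at most \<open>m\<close>. Such a stabilizer has expectation \<open>1\<close> in \<open>\<phi>\<close>, hence in every
  state agreeing with \<open>\<phi>\<close> on its support, and so fixes that state. Conversely, reduced states are
  determined by Pauli expectations, and a Pauli operator \<open>P\<close> supported on a region of size \<open>m\<close>
  either anticommutes with a stabilizer of weight at most \<open>m\<close>, and then its expectation vanishes
  in every state of the code, or commutes with all of them. In the second case \<open>P\<close> has nonzero
  expectation in \<open>\<phi>\<close> -- otherwise \<open>\<phi>\<close> and \<open>P \<phi>\<close> would be orthogonal states agreeing on regions of
  size \<open>m\<close>, \<open>U\<close> would map their normalized sum into \<open>C\<^sub>l(\<psi>)\<close>, and pulled back that sum would agree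
  with \<open>\<phi>\<close> on the support of \<open>P\<close>, although it is fixed by a multiple of \<open>P\<close> whose expectation in \<open>\<phi>\<close>
  is zero -- so \<open>P\<close> is a stabilizer up to a phase, with the same expectation in every state of the
  code.\<close>


section \<open>Finite sums\<close>

lemma sum_Pow_Un:
  assumes "finite A" "finite B" "A \<inter> B = {}"
  shows "(\<Sum>b\<in>Pow (A \<union> B). f b) = (\<Sum>a\<in>Pow A. \<Sum>c\<in>Pow B. f (a \<union> c))"
proof -
  have img: "Pow (A \<union> B) = (\<lambda>(a,c). a \<union> c) ` (Pow A \<times> Pow B)"
  proof
    show "Pow (A \<union> B) \<subseteq> (\<lambda>(a,c). a \<union> c) ` (Pow A \<times> Pow B)"
    proof
      fix b assume "b \<in> Pow (A \<union> B)"
      then have "b = (\<lambda>(a,c). a \<union> c) (b \<inter> A, b \<inter> B)" by auto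
      moreover have "(b \<inter> A, b \<inter> B) \<in> Pow A \<times> Pow B" by auto
      ultimately show "b \<in> (\<lambda>(a,c). a \<union> c) ` (Pow A \<times> Pow B)" by blast
    qed
  qed auto
  have inj: "inj_on (\<lambda>(a,c). a \<union> c) (Pow A \<times> Pow B)"
  proof (rule inj_onI, clarify)
    fix a c a' c' assume "a \<subseteq> A" "c \<subseteq> B" "a' \<subseteq> A" "c' \<subseteq> B" "a \<union> c = a' \<union> c'"
    with assms(3) show "a = a' \<and> c = c'" by blast
  qed
  have "(\<Sum>b\<in>Pow (A \<union> B). f b) = (\<Sum>p\<in>Pow A \<times> Pow B. f ((\<lambda>(a,c). a \<union> c) p))"
    unfolding img by (rule sum.reindex[OF inj, unfolded comp_def])
  also have "\<dots> = (\<Sum>a\<in>Pow A. \<Sum>c\<in>Pow B. f (a \<union> c))"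
    by (simp add: sum.cartesian_product split_beta)
  finally show ?thesis .
qed

lemma sum_Pow_split:
  assumes "finite N" "R \<subseteq> N"
  shows "(\<Sum>b\<in>Pow N. f b) = (\<Sum>a\<in>Pow R. \<Sum>c\<in>Pow (N - R). f (a \<union> c))"
proof -
  have "N = R \<union> (N - R)" using assms by auto
  then have "(\<Sum>b\<in>Pow N. f b) = (\<Sum>b\<in>Pow (R \<union> (N - R)). f b)" by simp
  also have "\<dots> = (\<Sum>a\<in>Pow R. \<Sum>c\<in>Pow (N - R). f (a \<union> c))"
    by (rule sum_Pow_Un) (use assms in \<open>auto intro: finite_subset\<close>)
  finally show ?thesis .
qed

lemma sum_Pow_sym_diff_reindex:
  assumes "x \<subseteq> N"
  shows "(\<Sum>b\<in>Pow N. f (sym_diff b x)) = (\<Sum>b\<in>Pow N. f b)"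
  by (rule sum.reindex_bij_witness[where i="\<lambda>b. sym_diff b x" and j="\<lambda>b. sym_diff b x"])
     (use assms in blast)+

lemma card_sym_diff:
  assumes "finite X" "finite Y"
  shows "card X + card Y = card (sym_diff X Y) + 2 * card (X \<inter> Y)"
proof -
  have "X \<union> Y = sym_diff X Y \<union> (X \<inter> Y)" "sym_diff X Y \<inter> (X \<inter> Y) = {}" by blast+
  then have "card (X \<union> Y) = card (sym_diff X Y) + card (X \<inter> Y)"
    using assms by (metis card_Un_disjoint finite_Diff finite_Int finite_UnI)
  then show ?thesis using card_Un_Int[OF assms] by simp
qed

lemma minus_one_power_card_sym_diff:
  assumes "finite X" "finite Y"
  shows "(-1::'a::comm_ring_1) ^ card (sym_diff X Y) = (-1) ^ card X * (-1) ^ card Y"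
proof -
  have "(-1::'a) ^ card X * (-1) ^ card Y = (-1) ^ (card (sym_diff X Y) + 2 * card (X \<inter> Y))"
    by (simp only: power_add[symmetric] card_sym_diff[OF assms])
  then show ?thesis by (simp add: power_add power_mult)
qed

lemma minus_one_power_card_Int_sym_diff:
  assumes "finite z"
  shows "(-1::'a::comm_ring_1) ^ card (z \<inter> sym_diff A B) = (-1) ^ card (z \<inter> A) * (-1) ^ card (z \<inter> B)"
proof -
  have "z \<inter> sym_diff A B = sym_diff (z \<inter> A) (z \<inter> B)" by blast
  then show ?thesis using assms by (simp add: minus_one_power_card_sym_diff)
qed

lemma sum_Pow_minus_one_power_card_Int:
  assumes "finite M" "c \<subseteq> M"
  shows "(\<Sum>z\<in>Pow M. (-1::complex) ^ card (z \<inter> c)) = (if c = {} then 2 ^ card M else 0)"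
proof (cases "c = {}")
  case True
  then show ?thesis using assms(1) by (simp add: card_Pow)
next
  case False
  then obtain j where j: "j \<in> c" by auto
  then have jM: "{j} \<subseteq> M" using assms by auto
  have "(\<Sum>z\<in>Pow M. (-1::complex) ^ card (z \<inter> c))
      = (\<Sum>c'\<in>Pow (M - {j}). \<Sum>a\<in>Pow {j}. (-1) ^ card ((a \<union> c') \<inter> c))"
    by (subst sum_Pow_split[OF assms(1) jM]) (rule sum.swap)
  also have "\<dots> = 0"
  proof (rule sum.neutral, rule ballI)
    fix c' assume c': "c' \<in> Pow (M - {j})"
    then have "finite (c' \<inter> c)" "j \<notin> c' \<inter> c"
      using assms(1) by (auto intro: finite_subset)
    moreover have "({j} \<union> c') \<inter> c = insert j (c' \<inter> c)" using j by auto
    moreover have "Pow {j} = {{}, {j}}" by blast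
    ultimately show "(\<Sum>a\<in>Pow {j}. (-1::complex) ^ card ((a \<union> c') \<inter> c)) = 0" by simp
  qed
  finally show ?thesis using False by simp
qed

lemma sum_swap3:
  "(\<Sum>a\<in>A. \<Sum>b\<in>B. \<Sum>c\<in>C. f a b c) = (\<Sum>b\<in>B. \<Sum>c\<in>C. \<Sum>a\<in>A. f a b c)"
  by (rule trans[OF sum.swap], rule sum.cong[OF refl], rule sum.swap)

lemma sum_delta_mult_left:
  "finite I \<Longrightarrow> a \<in> I \<Longrightarrow> (\<Sum>b\<in>I. (if a = b then 1 else 0) * f b) = (f a :: 'a::semiring_1)"
  by (simp add: if_distrib[of "\<lambda>x. x * _"] sum.delta cong: if_cong)

lemma sum_delta_mult_right:
  "finite I \<Longrightarrow> c \<in> I \<Longrightarrow> (\<Sum>b\<in>I. f b * (if b = c then 1 else 0)) = (f c :: 'a::semiring_1)"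
  by (simp add: if_distrib[of "\<lambda>x. _ * x"] sum.delta' cong: if_cong)

lemma sum_mult_cnj_sum:
  "(\<Sum>y\<in>A. f y) * cnj (\<Sum>y\<in>B. g y) = (\<Sum>y\<in>A. \<Sum>y'\<in>B. f y * cnj (g y'))"
  by (simp add: sum_product cnj_sum)

lemma sum_lessThan_add: "(\<Sum>i<(k1::nat) + k2. g i) = (\<Sum>i<k1. g i) + (\<Sum>i<k2. g (i + k1))"
proof -
  have "(\<Sum>i<k1 + k2. g i) = (\<Sum>i\<in>{0..<k1}. g i) + (\<Sum>i\<in>{k1..<k1 + k2}. g i)"
    by (simp add: atLeast0LessThan[symmetric] sum.atLeastLessThan_concat)
  also have "(\<Sum>i\<in>{k1..<k1 + k2}. g i) = (\<Sum>i\<in>{0..<k2}. g (i + k1))"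
    using sum.shift_bounds_nat_ivl[of g 0 k1 k2] by (simp add: add.commute)
  finally show ?thesis by (simp add: atLeast0LessThan)
qed

section \<open>Matrices over a finite index set\<close>

lemma hermitian_idempotent_traceless_eq_0:
  fixes M :: "'i \<Rightarrow> 'i \<Rightarrow> complex"
  assumes fin: "finite I"
    and herm: "\<And>a b. a \<in> I \<Longrightarrow> b \<in> I \<Longrightarrow> M b a = cnj (M a b)"
    and idem: "\<And>a c. a \<in> I \<Longrightarrow> c \<in> I \<Longrightarrow> (\<Sum>b\<in>I. M a b * M b c) = M a c"
    and tr: "(\<Sum>a\<in>I. M a a) = 0"
    and ab: "a \<in> I" "b \<in> I"
  shows "M a b = 0"
proof -
  have "complex_of_real (\<Sum>a\<in>I. \<Sum>b\<in>I. (cmod (M a b))\<^sup>2) = (\<Sum>a\<in>I. \<Sum>b\<in>I. M a b * cnj (M a b))"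
    unfolding of_real_sum by (intro sum.cong refl) (rule complex_norm_square)
  also have "\<dots> = (\<Sum>a\<in>I. \<Sum>b\<in>I. M a b * M b a)"
  proof (intro sum.cong refl)
    fix a b assume "a \<in> I" "b \<in> I"
    then show "M a b * cnj (M a b) = M a b * M b a" using herm[of a b] by simp
  qed
  also have "\<dots> = (\<Sum>a\<in>I. M a a)"
    by (intro sum.cong refl) (simp add: idem)
  also have "\<dots> = 0" by (rule tr)
  finally have z: "(\<Sum>a\<in>I. \<Sum>b\<in>I. (cmod (M a b))\<^sup>2) = 0" by (simp only: of_real_eq_0_iff)
  have "(\<Sum>b\<in>I. (cmod (M a b))\<^sup>2) = 0"
    using z fin ab(1) by (subst (asm) sum_nonneg_eq_0_iff) (auto intro: sum_nonneg)
  then have "(cmod (M a b))\<^sup>2 = 0"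
    using fin ab(2) by (subst (asm) sum_nonneg_eq_0_iff) auto
  then show ?thesis by simp
qed

text \<open>A square matrix with orthonormal columns also has orthonormal rows: \<open>I - G G\<^sup>\<dagger>\<close> is a
  traceless Hermitian idempotent.\<close>

lemma orthonormal_rows_if_orthonormal_columns:
  fixes G :: "'i \<Rightarrow> 'i \<Rightarrow> complex"
  assumes fin: "finite I"
    and cols: "\<And>x y. x \<in> I \<Longrightarrow> y \<in> I \<Longrightarrow> (\<Sum>w\<in>I. cnj (G w x) * G w y) = (if x = y then 1 else 0)"
    and "x \<in> I" "y \<in> I"
  shows "(\<Sum>w\<in>I. G x w * cnj (G y w)) = (if x = y then 1 else 0)"
proof -
  define P where "P a c = (\<Sum>w\<in>I. G a w * cnj (G c w))" for a c
  define M where "M a c = (if a = c then 1 else 0) - P a c" for a c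
  have PP: "(\<Sum>b\<in>I. P a b * P b c) = P a c" for a c
  proof -
    have "(\<Sum>b\<in>I. P a b * P b c)
        = (\<Sum>b\<in>I. \<Sum>w\<in>I. \<Sum>w'\<in>I. (G a w * cnj (G c w')) * (cnj (G b w) * G b w'))"
      unfolding P_def sum_product by (intro sum.cong refl) (simp add: algebra_simps)
    also have "\<dots> = (\<Sum>w\<in>I. \<Sum>w'\<in>I. (G a w * cnj (G c w')) * (\<Sum>b\<in>I. cnj (G b w) * G b w'))"
      by (subst sum_swap3) (simp add: sum_distrib_left)
    also have "\<dots> = (\<Sum>w\<in>I. \<Sum>w'\<in>I. if w = w' then G a w * cnj (G c w') else 0)"
      by (intro sum.cong refl) (simp add: cols)
    also have "\<dots> = P a c" unfolding P_def using fin by (simp add: sum.delta)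
    finally show ?thesis .
  qed
  have "M x y = 0"
  proof (rule hermitian_idempotent_traceless_eq_0[OF fin])
    show "M b a = cnj (M a b)" for a b
      unfolding M_def P_def by (simp add: cnj_sum mult.commute)
    show "(\<Sum>b\<in>I. M a b * M b c) = M a c" if "a \<in> I" "c \<in> I" for a c
    proof -
      have "(\<Sum>b\<in>I. M a b * M b c)
          = (\<Sum>b\<in>I. (if a = b then 1 else 0) * (if b = c then 1 else 0)) - (\<Sum>b\<in>I. (if a = b then 1 else 0) * P b c)
            - (\<Sum>b\<in>I. P a b * (if b = c then 1 else 0)) + (\<Sum>b\<in>I. P a b * P b c)"
        unfolding M_def by (simp add: algebra_simps sum.distrib sum_subtractf)
      then show ?thesis
        using that fin unfolding M_def PP sum_delta_mult_left[OF fin that(1)] sum_delta_mult_right[OF fin that(2)] by simp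
    qed
    have "(\<Sum>a\<in>I. P a a) = (\<Sum>w\<in>I. \<Sum>a\<in>I. cnj (G a w) * G a w)"
      unfolding P_def by (subst sum.swap) (simp add: mult.commute)
    also have "\<dots> = of_nat (card I)" by (simp add: cols)
    finally show "(\<Sum>a\<in>I. M a a) = 0" unfolding M_def by (simp add: sum_subtractf)
  qed (use assms in auto)
  then show ?thesis unfolding M_def P_def by (auto split: if_splits)
qed

lemma projection_onto_fixed_unit_vector:
  fixes P :: "'i \<Rightarrow> 'i \<Rightarrow> complex"
  assumes fin: "finite I"
    and herm: "\<And>a b. a \<in> I \<Longrightarrow> b \<in> I \<Longrightarrow> P b a = cnj (P a b)"
    and idem: "\<And>a c. a \<in> I \<Longrightarrow> c \<in> I \<Longrightarrow> (\<Sum>b\<in>I. P a b * P b c) = P a c"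
    and trace: "(\<Sum>a\<in>I. P a a) = 1"
    and unit: "(\<Sum>b\<in>I. cnj (\<phi> b) * \<phi> b) = 1"
    and fixed: "\<And>a. a \<in> I \<Longrightarrow> (\<Sum>b\<in>I. P a b * \<phi> b) = \<phi> a"
    and ac: "a \<in> I" "c \<in> I"
  shows "P a c = \<phi> a * cnj (\<phi> c)"
proof -
  define M where "M a c = P a c - \<phi> a * cnj (\<phi> c)" for a c
  have fixed': "(\<Sum>b\<in>I. cnj (\<phi> b) * P b c) = cnj (\<phi> c)" if "c \<in> I" for c
  proof -
    have "(\<Sum>b\<in>I. cnj (\<phi> b) * P b c) = cnj (\<Sum>b\<in>I. P c b * \<phi> b)"
      unfolding cnj_sum complex_cnj_mult using herm[OF that] by (intro sum.cong refl) simp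
    then show ?thesis using fixed[OF that] by simp
  qed
  have "M a c = 0"
  proof (rule hermitian_idempotent_traceless_eq_0[OF fin])
    show "M b a = cnj (M a b)" if "a \<in> I" "b \<in> I" for a b
      using herm[OF that] unfolding M_def by simp
    show "(\<Sum>b\<in>I. M a b * M b c) = M a c" if a: "a \<in> I" and c: "c \<in> I" for a c
    proof -
      have "(\<Sum>b\<in>I. M a b * M b c) = (\<Sum>b\<in>I. P a b * P b c - P a b * \<phi> b * cnj (\<phi> c)
          - \<phi> a * (cnj (\<phi> b) * P b c) + \<phi> a * cnj (\<phi> c) * (cnj (\<phi> b) * \<phi> b))"
        unfolding M_def by (intro sum.cong refl) (simp add: algebra_simps)
      also have "\<dots> = (\<Sum>b\<in>I. P a b * P b c) - (\<Sum>b\<in>I. P a b * \<phi> b) * cnj (\<phi> c)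
          - \<phi> a * (\<Sum>b\<in>I. cnj (\<phi> b) * P b c) + \<phi> a * cnj (\<phi> c) * (\<Sum>b\<in>I. cnj (\<phi> b) * \<phi> b)"
        by (simp only: sum.distrib sum_subtractf sum_distrib_left sum_distrib_right)
      finally show ?thesis unfolding M_def using a c by (simp add: idem fixed fixed' unit)
    qed
    show "(\<Sum>a\<in>I. M a a) = 0"
      unfolding M_def using trace unit by (simp add: sum_subtractf mult.commute)
  qed (fact ac)+
  then show ?thesis unfolding M_def by simp
qed

lemma rank_one_gram_proportional:
  fixes F :: "'i \<Rightarrow> 'x \<Rightarrow> complex"
  assumes "finite I"
    and gram: "\<And>x y. x \<in> X \<Longrightarrow> y \<in> X \<Longrightarrow> (\<Sum>i\<in>I. F i x * cnj (F i y)) = u x * cnj (u y)"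
    and x: "x \<in> X" and x0: "x0 \<in> X" and "i \<in> I"
  shows "u x0 * F i x = u x * F i x0"
proof -
  define g where "g i = u x0 * F i x - u x * F i x0" for i
  have "(\<Sum>i\<in>I. g i * cnj (g i))
      = (u x0 * cnj (u x0)) * (\<Sum>i\<in>I. F i x * cnj (F i x)) - (u x0 * cnj (u x)) * (\<Sum>i\<in>I. F i x * cnj (F i x0))
        - (u x * cnj (u x0)) * (\<Sum>i\<in>I. F i x0 * cnj (F i x)) + (u x * cnj (u x)) * (\<Sum>i\<in>I. F i x0 * cnj (F i x0))"
    unfolding g_def by (simp add: sum_distrib_left sum.distrib sum_subtractf algebra_simps)
  also have "\<dots> = 0" unfolding gram[OF x x] gram[OF x x0] gram[OF x0 x] gram[OF x0 x0] by (simp add: algebra_simps)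
  moreover have "complex_of_real (\<Sum>i\<in>I. (cmod (g i))\<^sup>2) = (\<Sum>i\<in>I. g i * cnj (g i))"
    unfolding of_real_sum by (intro sum.cong refl) (rule complex_norm_square)
  ultimately have "(\<Sum>i\<in>I. (cmod (g i))\<^sup>2) = 0" by (simp only: of_real_eq_0_iff)
  with assms have "(cmod (g i))\<^sup>2 = 0" by (simp add: sum_nonneg_eq_0_iff)
  then show ?thesis unfolding g_def by simp
qed

section \<open>Vectors and linear spans\<close>

definition cinner :: "nat \<Rightarrow> vec \<Rightarrow> vec \<Rightarrow> complex" where
  "cinner n v w = (\<Sum>b\<in>Pow {..<n}. cnj (v b) * w b)"

lemma cinner_self: "cinner n v v = complex_of_real (\<Sum>b\<in>Pow {..<n}. (cmod (v b))\<^sup>2)"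
  unfolding cinner_def of_real_sum
proof (intro sum.cong refl)
  fix b show "cnj (v b) * v b = complex_of_real ((cmod (v b))\<^sup>2)"
    using complex_norm_square[of "v b"] by (simp only: mult.commute)
qed

lemma is_pure_state_iff: "is_pure_state n v \<longleftrightarrow> is_state n v \<and> cinner n v v = 1"
  unfolding is_pure_state_def cinner_self by (simp only: of_real_eq_1_iff)

lemma cinner_cnj: "cinner n w v = cnj (cinner n v w)"
  by (simp add: cinner_def cnj_sum mult.commute)

lemma cinner_scale_right: "cinner n v (\<lambda>b. c * w b) = c * cinner n v w"
  unfolding cinner_def by (simp add: sum_distrib_left algebra_simps)

lemma cinner_scale: "cinner n (\<lambda>b. c * v b) (\<lambda>b. c * v b) = cnj c * c * cinner n v v"
  unfolding cinner_def by (simp add: sum_distrib_left algebra_simps)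

lemma cinner_lincomb:
  "cinner n (\<lambda>b. a * p b + c * q b) (\<lambda>b. a * p b + c * q b)
     = cnj a * a * cinner n p p + cnj a * c * cinner n p q + cnj c * a * cinner n q p + cnj c * c * cinner n q q"
  unfolding cinner_def by (simp add: sum.distrib sum_distrib_left algebra_simps)

lemma cinner_self_eq_0:
  assumes "is_state n v" "cinner n v v = 0"
  shows "v = (\<lambda>b. 0)"
proof
  fix b
  have "(\<Sum>b\<in>Pow {..<n}. (cmod (v b))\<^sup>2) = 0"
    using assms(2) unfolding cinner_self by (simp only: of_real_eq_0_iff)
  then have "\<forall>b\<in>Pow {..<n}. (cmod (v b))\<^sup>2 = 0" by (subst (asm) sum_nonneg_eq_0_iff) auto
  then show "v b = 0" using assms(1) by (cases "b \<subseteq> {..<n}") (auto simp: is_state_def)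
qed

lemma ex_nonzero_if_cinner_self_eq_1: "cinner n v v = 1 \<Longrightarrow> \<exists>b\<in>Pow {..<n}. v b \<noteq> 0"
  by (rule ccontr) (simp add: cinner_def)

lemma eq_if_cinner_eq_1:
  assumes "is_state n v" "is_state n w" "cinner n v v = 1" "cinner n w w = 1" "cinner n v w = 1"
  shows "v = w"
proof -
  define d where "d b = 1 * v b + (-1) * w b" for b
  have "cinner n d d = cinner n v v - cinner n v w - cinner n w v + cinner n w w"
    unfolding d_def[abs_def] cinner_lincomb by simp
  also have "\<dots> = 0" using assms(3-5) cinner_cnj[of n w v] by simp
  finally have "d = (\<lambda>b. 0)"
    by (rule cinner_self_eq_0[rotated]) (use assms(1,2) in \<open>simp add: is_state_def d_def\<close>)
  then show ?thesis unfolding d_def[abs_def] by (simp add: fun_eq_iff)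
qed

lemma cinner_orthonormal_sum:
  assumes "cinner n v v = 1" "cinner n w w = 1" "cinner n v w = 0"
  defines "r \<equiv> complex_of_real (1 / sqrt 2)"
  shows "cinner n (\<lambda>b. r * v b + r * w b) (\<lambda>b. r * v b + r * w b) = 1"
proof -
  have rr: "cnj r * r = 1 / 2" unfolding r_def by (simp flip: of_real_mult)
  show ?thesis unfolding cinner_lincomb rr using assms(1-3) cinner_cnj[of n w v] by simp
qed

definition basis_vec :: "nat set \<Rightarrow> vec" where
  "basis_vec c = (\<lambda>b. if b = c then 1 else 0)"

lemma is_state_basis_vec: "c \<subseteq> {..<n} \<Longrightarrow> is_state n (basis_vec c)"
  by (auto simp: is_state_def basis_vec_def)

lemma cinner_basis_vec_left: "c \<subseteq> {..<n} \<Longrightarrow> cinner n (basis_vec c) w = w c"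
  unfolding cinner_def basis_vec_def by (simp add: if_distrib[of "\<lambda>x. cnj x * _"] sum.delta' cong: if_cong)

lemma cinner_basis_vec_right: "c \<subseteq> {..<n} \<Longrightarrow> cinner n w (basis_vec c) = cnj (w c)"
  unfolding cinner_def basis_vec_def by (simp add: if_distrib[of "\<lambda>x. _ * x"] sum.delta' cong: if_cong)

lemma in_cspan: "v \<in> X \<Longrightarrow> v \<in> cspan X"
  unfolding cspan_def by (rule CollectI, rule exI[of _ 1], rule exI[of _ "\<lambda>_. 1"], rule exI[of _ "\<lambda>_. v"]) simp

lemma zero_in_cspan: "(\<lambda>b. 0) \<in> cspan X"
  unfolding cspan_def by (rule CollectI, rule exI[of _ 0]) simp

lemma scale_in_cspan:
  assumes "u \<in> cspan X"
  shows "(\<lambda>b. c * u b) \<in> cspan X"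
proof -
  obtain k :: nat and cs vs where u: "\<forall>i<k. vs i \<in> X" "u = (\<lambda>b. \<Sum>i<k. cs i * vs i b)"
    using assms unfolding cspan_def mem_Collect_eq by blast
  show ?thesis unfolding cspan_def
    by (rule CollectI, rule exI[of _ k], rule exI[of _ "\<lambda>i. c * cs i"], rule exI[of _ vs])
       (simp add: u sum_distrib_left mult.assoc)
qed

lemma add_in_cspan:
  assumes "u \<in> cspan X" "w \<in> cspan X"
  shows "(\<lambda>b. u b + w b) \<in> cspan X"
proof -
  obtain k1 :: nat and c1 vs1 where u: "\<forall>i<k1. vs1 i \<in> X" "u = (\<lambda>b. \<Sum>i<k1. c1 i * vs1 i b)"
    using assms(1) unfolding cspan_def mem_Collect_eq by blast
  obtain k2 :: nat and c2 vs2 where w: "\<forall>i<k2. vs2 i \<in> X" "w = (\<lambda>b. \<Sum>i<k2. c2 i * vs2 i b)"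
    using assms(2) unfolding cspan_def mem_Collect_eq by blast
  define c where "c i = (if i < k1 then c1 i else c2 (i - k1))" for i
  define vs where "vs i = (if i < k1 then vs1 i else vs2 (i - k1))" for i
  have "\<forall>i<k1 + k2. vs i \<in> X" using u(1) w(1) unfolding vs_def by auto
  moreover have "(\<lambda>b. u b + w b) = (\<lambda>b. \<Sum>i<k1 + k2. c i * vs i b)"
    unfolding sum_lessThan_add u(2) w(2) c_def vs_def by simp
  ultimately show ?thesis unfolding cspan_def by blast
qed

lemma in_cspan_if_normalized_multiples:
  assumes "is_state n v"
    and "\<And>c. cinner n (\<lambda>b. c * v b) (\<lambda>b. c * v b) = 1 \<Longrightarrow> (\<lambda>b. c * v b) \<in> cspan X"
  shows "v \<in> cspan X"
proof (cases "v = (\<lambda>b. 0)")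
  case True
  then show ?thesis using zero_in_cspan by simp
next
  case False
  define \<rho> where "\<rho> = (\<Sum>b\<in>Pow {..<n}. (cmod (v b))\<^sup>2)"
  define r where "r = sqrt \<rho>"
  have "\<rho> \<ge> 0" unfolding \<rho>_def by (rule sum_nonneg) simp
  moreover have "\<rho> \<noteq> 0"
  proof
    assume "\<rho> = 0"
    then have "cinner n v v = 0" unfolding cinner_self \<rho>_def by simp
    then show False using False cinner_self_eq_0[OF assms(1)] by blast
  qed
  ultimately have \<rho>: "\<rho> > 0" by simp
  then have r: "r > 0" unfolding r_def by simp
  have "cinner n (\<lambda>b. complex_of_real (1 / r) * v b) (\<lambda>b. complex_of_real (1 / r) * v b)
      = complex_of_real (1 / r * (1 / r) * \<rho>)"
    unfolding cinner_scale cinner_self \<rho>_def[symmetric] by simp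
  also have "\<dots> = 1" using \<rho> unfolding r_def by (simp add: field_simps flip: power2_eq_square)
  finally have "(\<lambda>b. complex_of_real (1 / r) * v b) \<in> cspan X" by (rule assms(2))
  then have "(\<lambda>b. complex_of_real r * (complex_of_real (1 / r) * v b)) \<in> cspan X"
    by (rule scale_in_cspan)
  then show ?thesis using r by (simp flip: mult.assoc of_real_mult)
qed

section \<open>Pauli operators\<close>

lemma pauli_apply_eq:
  "pauli_apply (k, x, z) v b = \<i> ^ k * (-1) ^ card (z \<inter> sym_diff b x) * v (sym_diff b x)"
  by (simp add: pauli_apply_def)

lemma is_pauliD:
  assumes "is_pauli n (k, x, z)"
  shows "k < 4" "x \<subseteq> {..<n}" "z \<subseteq> {..<n}" "finite x" "finite z"
  using assms by (auto simp: is_pauli_def intro: finite_subset)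

lemma is_state_pauli_apply:
  assumes "is_pauli n P" "is_state n v"
  shows "is_state n (pauli_apply P v)"
proof -
  obtain k x z where P: "P = (k, x, z)" by (cases P) auto
  have "\<not> sym_diff b x \<subseteq> {..<n}" if "\<not> b \<subseteq> {..<n}" for b
    using that is_pauliD(2)[OF assms(1)[unfolded P]] by blast
  then show ?thesis using assms(2) by (simp add: is_state_def P pauli_apply_eq)
qed

lemma pauli_apply_phase: "pauli_apply (k, x, z) v = (\<lambda>b. \<i> ^ k * pauli_apply (0, x, z) v b)"
  by (simp add: pauli_apply_eq fun_eq_iff)

lemma pauli_apply_id: "pauli_apply (0, {}, {}) v = v"
  by (simp add: pauli_apply_eq fun_eq_iff)

lemma pauli_apply_scale: "pauli_apply P (\<lambda>b. c * v b) = (\<lambda>b. c * pauli_apply P v b)"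
  by (cases P) (simp add: pauli_apply_eq fun_eq_iff algebra_simps)

lemma pauli_apply_sum: "pauli_apply P (\<lambda>b. \<Sum>t\<in>T. f t b) = (\<lambda>b. \<Sum>t\<in>T. pauli_apply P (f t) b)"
  by (cases P) (simp add: pauli_apply_eq fun_eq_iff sum_distrib_left)

lemma pauli_apply_lincomb:
  "pauli_apply P (\<lambda>b. a * v b + c * w b) = (\<lambda>b. a * pauli_apply P v b + c * pauli_apply P w b)"
  by (cases P) (simp add: pauli_apply_eq fun_eq_iff algebra_simps)

lemma cinner_pauli_apply:
  assumes "is_pauli n P"
  shows "cinner n (pauli_apply P v) (pauli_apply P w) = cinner n v w"
proof -
  obtain k x z where P: "P = (k, x, z)" by (cases P) auto
  have "cnj (\<i> ^ k) * \<i> ^ k = 1"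
    by (simp flip: power_mult_distrib)
  then have "cinner n (pauli_apply P v) (pauli_apply P w)
      = (\<Sum>b\<in>Pow {..<n}. cnj (v (sym_diff b x)) * w (sym_diff b x))"
    unfolding cinner_def P pauli_apply_eq
    by (intro sum.cong refl) (simp add: algebra_simps)
  also have "\<dots> = cinner n v w"
    unfolding cinner_def by (rule sum_Pow_sym_diff_reindex[OF is_pauliD(2)[OF assms[unfolded P]]])
  finally show ?thesis .
qed

lemma pauli_apply_pauli_apply:
  assumes "finite z1" "finite z2"
  shows "pauli_apply (k1, x1, z1) (pauli_apply (k2, x2, z2) v)
       = (\<lambda>b. \<i> ^ (k1 + k2) * (-1) ^ card (z1 \<inter> x2) * pauli_apply (0, sym_diff x1 x2, sym_diff z1 z2) v b)"
proof
  fix b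
  define c where "c = sym_diff b (sym_diff x1 x2)"
  have c: "sym_diff (sym_diff b x1) x2 = c" "sym_diff b x1 = sym_diff c x2" unfolding c_def by blast+
  have "z1 \<inter> sym_diff c x2 = sym_diff (z1 \<inter> c) (z1 \<inter> x2)" "sym_diff z1 z2 \<inter> c = sym_diff (z1 \<inter> c) (z2 \<inter> c)"
    by blast+
  then have "(-1::complex) ^ card (z1 \<inter> sym_diff b x1) = (-1) ^ card (z1 \<inter> c) * (-1) ^ card (z1 \<inter> x2)"
    "(-1::complex) ^ card (sym_diff z1 z2 \<inter> c) = (-1) ^ card (z1 \<inter> c) * (-1) ^ card (z2 \<inter> c)"
    using assms unfolding c(2) by (simp_all add: minus_one_power_card_sym_diff)
  then show "pauli_apply (k1, x1, z1) (pauli_apply (k2, x2, z2) v) b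
       = \<i> ^ (k1 + k2) * (-1) ^ card (z1 \<inter> x2) * pauli_apply (0, sym_diff x1 x2, sym_diff z1 z2) v b"
    unfolding pauli_apply_eq c(1) c_def[symmetric] by (simp add: power_add algebra_simps)
qed

lemma pauli_apply_square:
  assumes "finite z"
  shows "pauli_apply (k, x, z) (pauli_apply (k, x, z) v) = (\<lambda>b. \<i> ^ (k + k) * (-1) ^ card (z \<inter> x) * v b)"
  unfolding pauli_apply_pauli_apply[OF assms assms] by (simp add: pauli_apply_id)

lemma pauli_apply_involution:
  assumes "finite z"
  obtains k where "k < 4" "\<And>w. pauli_apply (k, x, z) (pauli_apply (k, x, z) w) = w"
proof -
  define k :: nat where "k = (if odd (card (z \<inter> x)) then 1 else 0)"
  have "\<i> ^ (k + k) * (-1) ^ card (z \<inter> x) = (1::complex)" unfolding k_def by auto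
  then show ?thesis using that[of k] unfolding pauli_apply_square[OF assms] by (simp add: k_def)
qed

definition pauli_symp :: "pauli \<Rightarrow> pauli \<Rightarrow> nat" where
  "pauli_symp P Q = (case P of (k1, x1, z1) \<Rightarrow> case Q of (k2, x2, z2) \<Rightarrow> card (z1 \<inter> x2) + card (z2 \<inter> x1))"

lemma pauli_apply_commute:
  assumes "is_pauli n P" "is_pauli n Q"
  shows "pauli_apply P (pauli_apply Q v) = (\<lambda>b. (-1) ^ pauli_symp P Q * pauli_apply Q (pauli_apply P v) b)"
proof -
  obtain k1 x1 z1 where P: "P = (k1, x1, z1)" by (cases P) auto
  obtain k2 x2 z2 where Q: "Q = (k2, x2, z2)" by (cases Q) auto
  have f: "finite z1" "finite z2" using is_pauliD assms P Q by blast+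
  have s: "sym_diff x2 x1 = sym_diff x1 x2" "sym_diff z2 z1 = sym_diff z1 z2" by blast+
  show ?thesis
    unfolding P Q pauli_symp_def pauli_apply_pauli_apply[OF f] pauli_apply_pauli_apply[OF f(2) f(1)] s
    by (simp add: power_add algebra_simps)
qed

lemma pauli_symp_phase_left: "pauli_symp (k, x, z) Q = pauli_symp (k', x, z) Q"
  by (cases Q) (simp add: pauli_symp_def)

lemma pauli_symp_phase_right: "pauli_symp P (k, x, z) = pauli_symp P (k', x, z)"
  by (cases P) (simp add: pauli_symp_def)

lemma cinner_pauli_apply_eq_0_if_anticommute:
  assumes s: "is_pauli n s" and Q: "is_pauli n Q" and "odd (pauli_symp s Q)"
    and fixed: "pauli_apply s y = y"
  shows "cinner n y (pauli_apply Q y) = 0"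
proof -
  have "cinner n y (pauli_apply Q y) = cinner n (pauli_apply s y) (pauli_apply s (pauli_apply Q y))"
    using cinner_pauli_apply[OF s, of y "pauli_apply Q y"] by simp
  also have "\<dots> = - cinner n y (pauli_apply Q y)"
    using assms by (simp add: pauli_apply_commute[OF s Q] cinner_scale_right[of n y "-1", simplified])
  finally show ?thesis by simp
qed

lemma i_power_mod_4: "\<i> ^ (k mod 4) = \<i> ^ k"
proof -
  have "\<i> ^ k = \<i> ^ (4 * (k div 4) + k mod 4)" by simp
  also have "\<dots> = (\<i> ^ 4) ^ (k div 4) * \<i> ^ (k mod 4)" by (simp only: power_add power_mult)
  finally show ?thesis by (simp add: power_numeral_reduce)
qed

lemma i_power_inj:
  assumes "k < 4" "k' < 4" "\<i> ^ k = \<i> ^ k'"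
  shows "k = k'"
proof -
  have "k \<in> {0, 1, 2, 3}" "k' \<in> {0, 1, 2, 3}" using assms(1,2) by auto
  then show ?thesis using assms(3) by (auto simp: power_numeral_reduce complex_eq_iff)
qed

lemma ex_i_power_mult_eq_1:
  fixes c :: complex
  assumes "c * c = 1 \<or> c * c = -1"
  obtains k where "k < 4" "\<i> ^ k * c = 1"
proof -
  note witness = that
  have "(c - 1) * (c + 1) = 0 \<or> (c - \<i>) * (c + \<i>) = 0"
    using assms by (auto simp: algebra_simps)
  then have "c = 1 \<or> c = -1 \<or> c = \<i> \<or> c = - \<i>"
    by (auto simp: eq_neg_iff_add_eq_0)
  then show ?thesis
  proof (elim disjE)
    show ?thesis if "c = 1" using that by (intro witness[of 0]) simp_all
    show ?thesis if "c = -1" using that by (intro witness[of 2]) simp_all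
    show ?thesis if "c = \<i>" using that by (intro witness[of 3]) (simp_all add: power_numeral_reduce)
    show ?thesis if "c = - \<i>" using that by (intro witness[of 1]) simp_all
  qed
qed

definition pmul :: "pauli \<Rightarrow> pauli \<Rightarrow> pauli" where
  "pmul P Q = (case P of (k1, x1, z1) \<Rightarrow> case Q of (k2, x2, z2) \<Rightarrow>
      ((k1 + k2 + 2 * card (z1 \<inter> x2)) mod 4, sym_diff x1 x2, sym_diff z1 z2))"

lemma pauli_apply_pmul:
  assumes "is_pauli n P" "is_pauli n Q"
  shows "pauli_apply P (pauli_apply Q v) = pauli_apply (pmul P Q) v"
proof -
  obtain k1 x1 z1 where P: "P = (k1, x1, z1)" by (cases P) auto
  obtain k2 x2 z2 where Q: "Q = (k2, x2, z2)" by (cases Q) auto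
  have f: "finite z1" "finite z2" using is_pauliD assms P Q by blast+
  have "\<i> ^ ((k1 + k2 + 2 * card (z1 \<inter> x2)) mod 4) = \<i> ^ (k1 + k2) * (-1) ^ card (z1 \<inter> x2)"
    unfolding i_power_mod_4 by (simp add: power_add power_mult)
  then show ?thesis unfolding P Q pauli_apply_pauli_apply[OF f] pmul_def
    by (simp add: pauli_apply_phase[of "(k1 + k2 + 2 * card (z1 \<inter> x2)) mod 4"])
qed

lemma is_pauli_pmul: "is_pauli n P \<Longrightarrow> is_pauli n Q \<Longrightarrow> is_pauli n (pmul P Q)"
  by (cases P, cases Q) (auto simp: is_pauli_def pmul_def)

lemma pauli_weight_le:
  assumes "x \<subseteq> L" "z \<subseteq> L" "finite L"
  shows "pauli_weight (k, x, z) \<le> card L"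
  using assms by (auto simp: pauli_weight_def intro: card_mono)

lemma pauli_apply_expand:
  assumes "is_pauli n P" "is_state n w" "a \<subseteq> {..<n}"
  shows "pauli_apply P w a = (\<Sum>c\<in>Pow {..<n}. w c * pauli_apply P (basis_vec c) a)"
proof -
  obtain k x z where P: "P = (k, x, z)" by (cases P) auto
  have x: "x \<subseteq> {..<n}" using assms(1) P by (simp add: is_pauli_def)
  have "(\<Sum>c\<in>Pow {..<n}. w c * pauli_apply P (basis_vec c) a)
      = (\<Sum>c\<in>Pow {..<n}. if c = sym_diff a x then \<i> ^ k * (-1) ^ card (z \<inter> sym_diff a x) * w c else 0)"
    unfolding P pauli_apply_eq basis_vec_def by (intro sum.cong refl) auto
  also have "\<dots> = \<i> ^ k * (-1) ^ card (z \<inter> sym_diff a x) * w (sym_diff a x)"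
    using assms(3) x by (auto simp: sum.delta)
  finally show ?thesis unfolding P pauli_apply_eq by simp
qed

lemma pauli_trace:
  assumes "is_pauli n (k, x, z)"
  shows "(\<Sum>a\<in>Pow {..<n}. pauli_apply (k, x, z) (basis_vec a) a) = (if x = {} \<and> z = {} then \<i> ^ k * 2 ^ n else 0)"
proof (cases "x = {}")
  case False
  have "pauli_apply (k, x, z) (basis_vec a) a = 0" for a
  proof -
    have "sym_diff a x \<noteq> a" using False by blast
    then show ?thesis by (simp add: pauli_apply_eq basis_vec_def)
  qed
  then show ?thesis using False by simp
next
  case True
  have z: "z \<subseteq> {..<n}" using assms by (simp add: is_pauli_def)
  have "(\<Sum>a\<in>Pow {..<n}. pauli_apply (k, x, z) (basis_vec a) a) = \<i> ^ k * (\<Sum>a\<in>Pow {..<n}. (-1) ^ card (a \<inter> z))"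
    unfolding True pauli_apply_eq basis_vec_def by (simp add: sum_distrib_left Int_commute)
  also have "\<dots> = (if z = {} then \<i> ^ k * 2 ^ n else 0)"
    using z by (simp add: sum_Pow_minus_one_power_card_Int)
  finally show ?thesis using True by simp
qed

section \<open>Reduced density matrices\<close>

text \<open>\<open>cross_rdm n R v w\<close> is the matrix of \<open>tr\<^bsub>[n] - R\<^esub> |v\<rangle>\<langle>w|\<close>, so \<open>rdm n R v\<close> is
  \<open>cross_rdm n R v v\<close> restricted to subsets of \<open>R\<close>.\<close>

definition cross_rdm :: "nat \<Rightarrow> nat set \<Rightarrow> vec \<Rightarrow> vec \<Rightarrow> nat set \<Rightarrow> nat set \<Rightarrow> complex" where
  "cross_rdm n R v w u u' = (\<Sum>z\<in>Pow ({..<n} - R). v (u \<union> z) * cnj (w (u' \<union> z)))"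

lemma rdm_eq_cross_rdm: "rdm n R v u u' = (if u \<subseteq> R \<and> u' \<subseteq> R then cross_rdm n R v v u u' else 0)"
  by (simp add: rdm_def cross_rdm_def)

lemma rdm_eqI:
  assumes "\<And>u u'. u \<subseteq> R \<Longrightarrow> u' \<subseteq> R \<Longrightarrow> cross_rdm n R v v u u' = cross_rdm n R w w u u'"
  shows "rdm n R v = rdm n R w"
  using assms by (simp add: rdm_eq_cross_rdm fun_eq_iff)

lemma rdm_eqD:
  assumes "rdm n R v = rdm n R w" "u \<subseteq> R" "u' \<subseteq> R"
  shows "cross_rdm n R v v u u' = cross_rdm n R w w u u'"
  using assms by (metis rdm_eq_cross_rdm)

lemma cinner_eq_cross_rdm: "cinner n v w = cross_rdm n {} w v {} {}"
  by (simp add: cinner_def cross_rdm_def mult.commute)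

lemma cross_rdm_subset:
  assumes "A \<subseteq> R" "R \<subseteq> {..<n}"
  shows "cross_rdm n A v w u u' = (\<Sum>c\<in>Pow (R - A). cross_rdm n R v w (u \<union> c) (u' \<union> c))"
proof -
  have sub: "R - A \<subseteq> {..<n} - A" using assms by blast
  have eq: "({..<n} - A) - (R - A) = {..<n} - R" using assms by blast
  have "cross_rdm n A v w u u'
      = (\<Sum>c\<in>Pow (R - A). \<Sum>d\<in>Pow (({..<n} - A) - (R - A)). v (u \<union> (c \<union> d)) * cnj (w (u' \<union> (c \<union> d))))"
    unfolding cross_rdm_def by (rule sum_Pow_split[OF _ sub]) simp
  also have "\<dots> = (\<Sum>c\<in>Pow (R - A). cross_rdm n R v w (u \<union> c) (u' \<union> c))"
    unfolding eq cross_rdm_def by (simp add: Un_assoc)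
  finally show ?thesis .
qed

lemma rdm_eq_subset:
  assumes "A \<subseteq> R" "R \<subseteq> {..<n}" "rdm n R v = rdm n R w"
  shows "rdm n A v = rdm n A w"
proof (rule rdm_eqI)
  fix u u' assume u: "u \<subseteq> A" "u' \<subseteq> A"
  have "cross_rdm n R v v (u \<union> c) (u' \<union> c) = cross_rdm n R w w (u \<union> c) (u' \<union> c)"
    if "c \<in> Pow (R - A)" for c
    using that u assms(1) by (intro rdm_eqD[OF assms(3)]) auto
  then show "cross_rdm n A v v u u' = cross_rdm n A w w u u'"
    unfolding cross_rdm_subset[OF assms(1,2)] by simp
qed

lemma cinner_pauli_apply_eq_sum_cross_rdm:
  assumes "x \<subseteq> R" "z \<subseteq> R" "R \<subseteq> {..<n}"
  shows "cinner n v (pauli_apply (k, x, z) w)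
       = (\<Sum>a\<in>Pow R. \<i> ^ k * (-1) ^ card (z \<inter> sym_diff a x) * cross_rdm n R w v (sym_diff a x) a)"
proof -
  have "cinner n v (pauli_apply (k, x, z) w)
      = (\<Sum>a\<in>Pow R. \<Sum>c\<in>Pow ({..<n} - R). cnj (v (a \<union> c))
          * (\<i> ^ k * (-1) ^ card (z \<inter> sym_diff (a \<union> c) x) * w (sym_diff (a \<union> c) x)))"
    unfolding cinner_def pauli_apply_eq by (rule sum_Pow_split[OF _ assms(3)]) simp
  also have "\<dots> = (\<Sum>a\<in>Pow R. \<Sum>c\<in>Pow ({..<n} - R).
      \<i> ^ k * (-1) ^ card (z \<inter> sym_diff a x) * (w (sym_diff a x \<union> c) * cnj (v (a \<union> c))))"
  proof (intro sum.cong refl)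
    fix a c assume "a \<in> Pow R" "c \<in> Pow ({..<n} - R)"
    then have "sym_diff (a \<union> c) x = sym_diff a x \<union> c" "z \<inter> (sym_diff a x \<union> c) = z \<inter> sym_diff a x"
      using assms by blast+
    then show "cnj (v (a \<union> c)) * (\<i> ^ k * (-1) ^ card (z \<inter> sym_diff (a \<union> c) x) * w (sym_diff (a \<union> c) x))
        = \<i> ^ k * (-1) ^ card (z \<inter> sym_diff a x) * (w (sym_diff a x \<union> c) * cnj (v (a \<union> c)))"
      by (simp add: algebra_simps)
  qed
  also have "\<dots> = (\<Sum>a\<in>Pow R. \<i> ^ k * (-1) ^ card (z \<inter> sym_diff a x) * cross_rdm n R w v (sym_diff a x) a)"
    unfolding cross_rdm_def by (simp add: sum_distrib_left)
  finally show ?thesis .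
qed

lemma cinner_pauli_apply_eq_if_rdm_eq:
  assumes "x \<subseteq> R" "z \<subseteq> R" "R \<subseteq> {..<n}" "rdm n R v = rdm n R v'"
  shows "cinner n v (pauli_apply (k, x, z) v) = cinner n v' (pauli_apply (k, x, z) v')"
  unfolding cinner_pauli_apply_eq_sum_cross_rdm[OF assms(1-3)]
proof (rule sum.cong[OF refl])
  fix a assume a: "a \<in> Pow R"
  then have "sym_diff a x \<subseteq> R" using assms by blast
  then show "\<i> ^ k * (-1) ^ card (z \<inter> sym_diff a x) * cross_rdm n R v v (sym_diff a x) a =
         \<i> ^ k * (-1) ^ card (z \<inter> sym_diff a x) * cross_rdm n R v' v' (sym_diff a x) a"
    using rdm_eqD[OF assms(4)] a by simp
qed

text \<open>Fourier inversion on \<open>Pow L\<close>: the \<open>Z\<close>-parts of the Pauli expectations recover each entry of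
  the reduced density matrix.\<close>

lemma sum_Pow_pauli_expectation:
  assumes L: "L \<subseteq> {..<n}" and u: "u \<subseteq> L" "u' \<subseteq> L"
  shows "(\<Sum>z\<in>Pow L. (-1) ^ card (z \<inter> u) * cinner n v (pauli_apply (0, sym_diff u u', z) v))
       = 2 ^ card L * cross_rdm n L v v u u'"
proof -
  define x where "x = sym_diff u u'"
  define R where "R a = cross_rdm n L v v (sym_diff a x) a" for a
  have fin: "finite L" using L finite_subset by blast
  have "(\<Sum>z\<in>Pow L. (-1) ^ card (z \<inter> u) * cinner n v (pauli_apply (0, x, z) v))
      = (\<Sum>z\<in>Pow L. \<Sum>a\<in>Pow L. R a * (-1) ^ card (z \<inter> sym_diff a u'))"
  proof (rule sum.cong[OF refl])
    fix z assume z: "z \<in> Pow L"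
    have xz: "x \<subseteq> L" "z \<subseteq> L" using u z unfolding x_def by blast+
    have sign: "(-1::complex) ^ card (z \<inter> u) * (-1) ^ card (z \<inter> sym_diff a x)
        = (-1) ^ card (z \<inter> sym_diff a u')" for a
    proof -
      have "sym_diff a u' = sym_diff u (sym_diff a x)" unfolding x_def by blast
      then show ?thesis using z fin by (simp add: minus_one_power_card_Int_sym_diff finite_subset)
    qed
    show "(-1) ^ card (z \<inter> u) * cinner n v (pauli_apply (0, x, z) v)
        = (\<Sum>a\<in>Pow L. R a * (-1) ^ card (z \<inter> sym_diff a u'))"
      unfolding cinner_pauli_apply_eq_sum_cross_rdm[OF xz L] R_def sum_distrib_left
      by (intro sum.cong refl) (simp flip: sign)
  qed
  also have "\<dots> = (\<Sum>a\<in>Pow L. R a * (\<Sum>z\<in>Pow L. (-1) ^ card (z \<inter> sym_diff a u')))"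
    by (subst sum.swap) (simp add: sum_distrib_left)
  also have "\<dots> = (\<Sum>a\<in>Pow L. R a * (if a = u' then 2 ^ card L else 0))"
  proof (intro sum.cong refl)
    fix a assume "a \<in> Pow L"
    then have "sym_diff a u' \<subseteq> L" "sym_diff a u' = {} \<longleftrightarrow> a = u'" using u by blast+
    then show "R a * (\<Sum>z\<in>Pow L. (-1) ^ card (z \<inter> sym_diff a u')) = R a * (if a = u' then 2 ^ card L else 0)"
      using fin by (simp add: sum_Pow_minus_one_power_card_Int)
  qed
  also have "\<dots> = (\<Sum>a\<in>Pow L. if a = u' then 2 ^ card L * R u' else 0)"
    by (intro sum.cong refl) simp
  also have "\<dots> = 2 ^ card L * R u'"
    using u fin by (simp add: sum.delta')
  also have "sym_diff u' x = u" unfolding x_def by blast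
  then have "R u' = cross_rdm n L v v u u'" unfolding R_def by simp
  finally show ?thesis unfolding x_def .
qed

lemma rdm_eq_if_pauli_expectations_eq:
  assumes "L \<subseteq> {..<n}"
    and "\<And>x z. x \<subseteq> L \<Longrightarrow> z \<subseteq> L \<Longrightarrow> cinner n v (pauli_apply (0, x, z) v) = cinner n w (pauli_apply (0, x, z) w)"
  shows "rdm n L v = rdm n L w"
proof (rule rdm_eqI)
  fix u u' assume u: "u \<subseteq> L" "u' \<subseteq> L"
  then have "sym_diff u u' \<subseteq> L" by blast
  then have "(2::complex) ^ card L * cross_rdm n L v v u u' = 2 ^ card L * cross_rdm n L w w u u'"
    unfolding sum_Pow_pauli_expectation[OF assms(1) u, symmetric] using assms(2) by (intro sum.cong) auto
  then show "cross_rdm n L v v u u' = cross_rdm n L w w u u'" by simp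
qed

section \<open>Circuits and lightcones\<close>

lemma gate_apply_eq: "gate_apply (Q, G) v b = (\<Sum>y\<in>Pow Q. G (b \<inter> Q) y * v ((b - Q) \<union> y))"
  by (simp add: gate_apply_def)

lemma is_gateD:
  assumes "is_gate n (Q, G)"
  shows "Q \<subseteq> {..<n}" "finite Q"
    "\<And>x y. x \<subseteq> Q \<Longrightarrow> y \<subseteq> Q \<Longrightarrow> (\<Sum>w\<in>Pow Q. cnj (G w x) * G w y) = (if x = y then 1 else 0)"
  using assms by (auto simp: is_gate_def intro: finite_subset)

lemma is_state_gate_apply:
  assumes "is_gate n g" "is_state n v"
  shows "is_state n (gate_apply g v)"
proof -
  obtain Q G where g: "g = (Q, G)" by (cases g) auto
  have Q: "Q \<subseteq> {..<n}" using is_gateD(1) assms(1) g by blast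
  show ?thesis unfolding is_state_def
  proof (intro allI impI)
    fix b assume b: "\<not> b \<subseteq> {..<n}"
    have "\<And>y. y \<in> Pow Q \<Longrightarrow> v ((b - Q) \<union> y) = 0"
    proof -
      fix y assume "y \<in> Pow Q"
      have "\<not> (b - Q) \<union> y \<subseteq> {..<n}" using b Q by blast
      then show "v ((b - Q) \<union> y) = 0" using assms(2) by (simp add: is_state_def)
    qed
    then show "gate_apply g v b = 0" by (simp add: g gate_apply_eq)
  qed
qed

lemma gate_apply_sum:
  "gate_apply g (\<lambda>b. \<Sum>i<k. c i * vs i b) = (\<lambda>b. \<Sum>i<k. c i * gate_apply g (vs i) b)"
proof -
  obtain Q G where g: "g = (Q, G)" by (cases g) auto
  show ?thesis unfolding g fun_eq_iff gate_apply_eq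
    by (simp add: sum_distrib_left algebra_simps sum.swap[of _ "Pow Q"])
qed

lemma gate_apply_lincomb:
  "gate_apply g (\<lambda>b. a * v b + c * w b) = (\<lambda>b. a * gate_apply g v b + c * gate_apply g w b)"
proof -
  obtain Q G where g: "g = (Q, G)" by (cases g) auto
  show ?thesis unfolding g fun_eq_iff gate_apply_eq
    by (simp add: sum_distrib_left algebra_simps sum.distrib)
qed

lemma cross_rdm_gate_apply_disjoint:
  assumes g: "is_gate n (Q, G)" and R: "R \<subseteq> {..<n}" and QR: "Q \<inter> R = {}"
    and u: "u \<subseteq> R" "u' \<subseteq> R"
  shows "cross_rdm n R (gate_apply (Q, G) v) (gate_apply (Q, G) w) u u' = cross_rdm n R v w u u'"
proof -
  note gd = is_gateD[OF g]
  define D where "D = ({..<n} - R) - Q"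
  have QN: "Q \<subseteq> {..<n} - R" using gd(1) QR by blast
  have "cross_rdm n R (gate_apply (Q, G) v) (gate_apply (Q, G) w) u u'
     = (\<Sum>q\<in>Pow Q. \<Sum>d\<in>Pow D. gate_apply (Q, G) v (u \<union> (q \<union> d)) * cnj (gate_apply (Q, G) w (u' \<union> (q \<union> d))))"
    unfolding cross_rdm_def D_def by (rule sum_Pow_split[OF _ QN]) simp
  also have "\<dots> = (\<Sum>q\<in>Pow Q. \<Sum>d\<in>Pow D. \<Sum>y\<in>Pow Q. \<Sum>y'\<in>Pow Q. (G q y * cnj (G q y')) * (v ((u \<union> d) \<union> y) * cnj (w ((u' \<union> d) \<union> y'))))"
  proof (intro sum.cong refl)
    fix q d assume q: "q \<in> Pow Q" and d: "d \<in> Pow D"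
    have e1: "(u \<union> (q \<union> d)) \<inter> Q = q" "(u' \<union> (q \<union> d)) \<inter> Q = q" using q d u QR unfolding D_def by blast+
    have e2: "(u \<union> (q \<union> d)) - Q = u \<union> d" "(u' \<union> (q \<union> d)) - Q = u' \<union> d" using q d u QR unfolding D_def by blast+
    show "gate_apply (Q, G) v (u \<union> (q \<union> d)) * cnj (gate_apply (Q, G) w (u' \<union> (q \<union> d)))
        = (\<Sum>y\<in>Pow Q. \<Sum>y'\<in>Pow Q. (G q y * cnj (G q y')) * (v ((u \<union> d) \<union> y) * cnj (w ((u' \<union> d) \<union> y'))))"
      unfolding gate_apply_eq e1 e2 sum_mult_cnj_sum by (simp add: algebra_simps)
  qed
  also have "\<dots> = (\<Sum>d\<in>Pow D. \<Sum>y\<in>Pow Q. \<Sum>y'\<in>Pow Q. (\<Sum>q\<in>Pow Q. G q y * cnj (G q y')) * (v ((u \<union> d) \<union> y) * cnj (w ((u' \<union> d) \<union> y'))))"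
    by (rule trans[OF sum.swap], rule sum.cong[OF refl], subst sum_swap3, simp add: sum_distrib_right)
  also have "\<dots> = (\<Sum>d\<in>Pow D. \<Sum>y\<in>Pow Q. \<Sum>y'\<in>Pow Q. (if y = y' then v ((u \<union> d) \<union> y) * cnj (w ((u' \<union> d) \<union> y')) else 0))"
  proof (intro sum.cong refl)
    fix d y y' assume y: "y \<in> Pow Q" "y' \<in> Pow Q"
    have "(\<Sum>q\<in>Pow Q. G q y * cnj (G q y')) = cnj (\<Sum>q\<in>Pow Q. cnj (G q y) * G q y')"
      by (simp add: cnj_sum mult.commute)
    also have "\<dots> = (if y = y' then 1 else 0)" using gd(3)[of y y'] y by simp
    finally show "(\<Sum>q\<in>Pow Q. G q y * cnj (G q y')) * (v ((u \<union> d) \<union> y) * cnj (w ((u' \<union> d) \<union> y')))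
        = (if y = y' then v ((u \<union> d) \<union> y) * cnj (w ((u' \<union> d) \<union> y')) else 0)" by simp
  qed
  also have "\<dots> = (\<Sum>d\<in>Pow D. \<Sum>y\<in>Pow Q. v ((u \<union> d) \<union> y) * cnj (w ((u' \<union> d) \<union> y)))"
    using gd(2) by (simp add: sum.delta)
  also have "\<dots> = (\<Sum>y\<in>Pow Q. \<Sum>d\<in>Pow D. v (u \<union> (y \<union> d)) * cnj (w (u' \<union> (y \<union> d))))"
    by (subst sum.swap) (simp add: Un_ac)
  also have "\<dots> = cross_rdm n R v w u u'"
    unfolding cross_rdm_def D_def by (rule sum_Pow_split[symmetric, OF _ QN]) simp
  finally show ?thesis .
qed

lemma cross_rdm_gate_apply_subset:
  assumes g: "is_gate n (Q, G)" and R: "R \<subseteq> {..<n}" and QR: "Q \<subseteq> R"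
    and u: "u \<subseteq> R" "u' \<subseteq> R"
  shows "cross_rdm n R (gate_apply (Q, G) v) (gate_apply (Q, G) w) u u'
       = (\<Sum>y\<in>Pow Q. \<Sum>y'\<in>Pow Q. G (u \<inter> Q) y * cnj (G (u' \<inter> Q) y') * cross_rdm n R v w ((u - Q) \<union> y) ((u' - Q) \<union> y'))"
proof -
  have "cross_rdm n R (gate_apply (Q, G) v) (gate_apply (Q, G) w) u u'
      = (\<Sum>z\<in>Pow ({..<n} - R). \<Sum>y\<in>Pow Q. \<Sum>y'\<in>Pow Q. G (u \<inter> Q) y * cnj (G (u' \<inter> Q) y') * (v (((u - Q) \<union> y) \<union> z) * cnj (w (((u' - Q) \<union> y') \<union> z))))"
    unfolding cross_rdm_def
  proof (intro sum.cong refl)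
    fix z assume z: "z \<in> Pow ({..<n} - R)"
    have e1: "(u \<union> z) \<inter> Q = u \<inter> Q" "(u' \<union> z) \<inter> Q = u' \<inter> Q" using z QR by blast+
    have e2: "\<And>y. ((u \<union> z) - Q) \<union> y = ((u - Q) \<union> y) \<union> z" "\<And>y. ((u' \<union> z) - Q) \<union> y = ((u' - Q) \<union> y) \<union> z"
      using z QR by blast+
    show "gate_apply (Q, G) v (u \<union> z) * cnj (gate_apply (Q, G) w (u' \<union> z))
      = (\<Sum>y\<in>Pow Q. \<Sum>y'\<in>Pow Q. G (u \<inter> Q) y * cnj (G (u' \<inter> Q) y') * (v (((u - Q) \<union> y) \<union> z) * cnj (w (((u' - Q) \<union> y') \<union> z))))"
      unfolding gate_apply_eq e1 e2 sum_mult_cnj_sum by (simp add: algebra_simps)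
  qed
  also have "\<dots> = (\<Sum>y\<in>Pow Q. \<Sum>y'\<in>Pow Q. G (u \<inter> Q) y * cnj (G (u' \<inter> Q) y') * cross_rdm n R v w ((u - Q) \<union> y) ((u' - Q) \<union> y'))"
    unfolding cross_rdm_def
    by (subst sum_swap3, simp add: sum_distrib_left)
  finally show ?thesis .
qed

lemma rdm_gate_apply_eq_if_disjoint:
  assumes "is_gate n (Q, G)" "R \<subseteq> {..<n}" "Q \<inter> R = {}" "rdm n R v = rdm n R v'"
  shows "rdm n R (gate_apply (Q, G) v) = rdm n R (gate_apply (Q, G) v')"
proof (rule rdm_eqI)
  fix u u' assume u: "u \<subseteq> R" "u' \<subseteq> R"
  show "cross_rdm n R (gate_apply (Q, G) v) (gate_apply (Q, G) v) u u'
      = cross_rdm n R (gate_apply (Q, G) v') (gate_apply (Q, G) v') u u'"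
    unfolding cross_rdm_gate_apply_disjoint[OF assms(1-3) u] by (rule rdm_eqD[OF assms(4) u])
qed

lemma rdm_gate_apply_eq_if_subset:
  assumes "is_gate n (Q, G)" "R \<subseteq> {..<n}" "Q \<subseteq> R" "rdm n R v = rdm n R v'"
  shows "rdm n R (gate_apply (Q, G) v) = rdm n R (gate_apply (Q, G) v')"
proof (rule rdm_eqI)
  fix u u' assume u: "u \<subseteq> R" "u' \<subseteq> R"
  have "cross_rdm n R v v ((u - Q) \<union> y) ((u' - Q) \<union> y') = cross_rdm n R v' v' ((u - Q) \<union> y) ((u' - Q) \<union> y')"
    if "y \<in> Pow Q" "y' \<in> Pow Q" for y y'
    using that u assms(3) by (intro rdm_eqD[OF assms(4)]) auto
  then show "cross_rdm n R (gate_apply (Q, G) v) (gate_apply (Q, G) v) u u'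
      = cross_rdm n R (gate_apply (Q, G) v') (gate_apply (Q, G) v') u u'"
    unfolding cross_rdm_gate_apply_subset[OF assms(1-3) u] by (intro sum.cong refl) simp
qed

lemma rdm_gate_apply_eq:
  assumes g: "is_gate n g" and R: "R \<subseteq> {..<n}"
    and eq: "rdm n (lc_step g R) v = rdm n (lc_step g R) v'"
  shows "rdm n R (gate_apply g v) = rdm n R (gate_apply g v')"
proof -
  obtain Q G where gg: "g = (Q, G)" by (cases g) auto
  note g' = g[unfolded gg]
  show ?thesis
  proof (cases "Q \<inter> R = {}")
    case True
    then have "rdm n R v = rdm n R v'" using eq by (simp add: gg lc_step_def)
    then show ?thesis unfolding gg by (rule rdm_gate_apply_eq_if_disjoint[OF g' R True])
  next
    case False
    have RQ: "R \<union> Q \<subseteq> {..<n}" using R is_gateD(1)[OF g'] by simp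
    have "rdm n (R \<union> Q) v = rdm n (R \<union> Q) v'"
      using eq False by (simp add: gg lc_step_def Int_commute)
    then have "rdm n (R \<union> Q) (gate_apply g v) = rdm n (R \<union> Q) (gate_apply g v')"
      unfolding gg by (rule rdm_gate_apply_eq_if_subset[OF g' RQ Un_upper2])
    then show ?thesis by (rule rdm_eq_subset[OF Un_upper1 RQ])
  qed
qed

lemma circuit_apply_Cons: "circuit_apply (g # gs) v = circuit_apply gs (gate_apply g v)"
  by (simp add: circuit_apply_def)

lemma circuit_apply_Nil: "circuit_apply [] v = v"
  by (simp add: circuit_apply_def)

lemma circuit_apply_append: "circuit_apply (xs @ ys) v = circuit_apply ys (circuit_apply xs v)"
  by (simp add: circuit_apply_def)

lemma lc_step_subset: "is_gate n g \<Longrightarrow> S \<subseteq> {..<n} \<Longrightarrow> lc_step g S \<subseteq> {..<n}"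
  by (cases g) (auto simp: lc_step_def is_gate_def)

lemma back_lc_subset: "\<forall>g\<in>set U. is_gate n g \<Longrightarrow> S \<subseteq> {..<n} \<Longrightarrow> back_lc U S \<subseteq> {..<n}"
  by (induction U) (simp_all add: lc_step_subset)

lemma fwd_lc_subset: "\<forall>g\<in>set U. is_gate n g \<Longrightarrow> S \<subseteq> {..<n} \<Longrightarrow> fwd_lc U S \<subseteq> {..<n}"
  by (induction U arbitrary: S) (simp_all add: lc_step_subset)

lemma rdm_circuit_apply_eq:
  assumes "\<forall>g\<in>set U. is_gate n g" "A \<subseteq> {..<n}"
    and "rdm n (back_lc U A) v = rdm n (back_lc U A) v'"
  shows "rdm n A (circuit_apply U v) = rdm n A (circuit_apply U v')"
  using assms
proof (induction U arbitrary: v v')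
  case Nil
  then show ?case by (simp add: circuit_apply_Nil)
next
  case (Cons g gs)
  have sub: "back_lc gs A \<subseteq> {..<n}" using back_lc_subset[of gs n A] Cons.prems by simp
  have "rdm n (back_lc gs A) (gate_apply g v) = rdm n (back_lc gs A) (gate_apply g v')"
    by (rule rdm_gate_apply_eq[OF _ sub]) (use Cons.prems in simp_all)
  note h = this
  show ?case unfolding circuit_apply_Cons by (rule Cons.IH) (use Cons.prems h in simp_all)
qed

lemma cinner_gate_apply:
  assumes "is_gate n g"
  shows "cinner n (gate_apply g v) (gate_apply g w) = cinner n v w"
proof -
  obtain Q G where gg: "g = (Q, G)" by (cases g) auto
  show ?thesis unfolding cinner_eq_cross_rdm gg
    by (rule cross_rdm_gate_apply_disjoint) (use assms gg in auto)
qed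

lemma cinner_circuit_apply:
  assumes "\<forall>g\<in>set U. is_gate n g"
  shows "cinner n (circuit_apply U v) (circuit_apply U w) = cinner n v w"
  using assms by (induction U arbitrary: v w) (simp_all add: circuit_apply_Nil circuit_apply_Cons cinner_gate_apply)

lemma is_state_circuit_apply:
  assumes "\<forall>g\<in>set U. is_gate n g" "is_state n v"
  shows "is_state n (circuit_apply U v)"
  using assms by (induction U arbitrary: v) (simp_all add: circuit_apply_Nil circuit_apply_Cons is_state_gate_apply)

lemma circuit_apply_sum:
  "circuit_apply U (\<lambda>b. \<Sum>i<k. c i * vs i b) = (\<lambda>b. \<Sum>i<k. c i * circuit_apply U (vs i) b)"
  by (induction U arbitrary: vs) (simp_all add: circuit_apply_Nil circuit_apply_Cons gate_apply_sum)

lemma circuit_apply_lincomb: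
  "circuit_apply U (\<lambda>b. a * v b + c * w b) = (\<lambda>b. a * circuit_apply U v b + c * circuit_apply U w b)"
  by (induction U arbitrary: v w) (simp_all add: circuit_apply_Nil circuit_apply_Cons gate_apply_lincomb)

lemma circuit_apply_scale: "circuit_apply U (\<lambda>b. a * v b) = (\<lambda>b. a * circuit_apply U v b)"
  using circuit_apply_lincomb[of U a v 0 v] by simp

definition gate_adj :: "gate \<Rightarrow> gate" where
  "gate_adj g = (fst g, \<lambda>a b. cnj (snd g b a))"

lemma gate_adj_eq: "gate_adj (Q, G) = (Q, \<lambda>a b. cnj (G b a))"
  by (simp add: gate_adj_def)

lemma gate_adj_gate_adj: "gate_adj (gate_adj g) = g"
  by (cases g) (simp add: gate_adj_def)

lemma is_gate_gate_adj:
  assumes "is_gate n g"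
  shows "is_gate n (gate_adj g)"
proof -
  obtain Q G where gg: "g = (Q, G)" by (cases g) auto
  note gd = is_gateD[OF assms[unfolded gg]]
  have "(\<Sum>w\<in>Pow Q. G x w * cnj (G y w)) = (if x = y then 1 else 0)" if "x \<subseteq> Q" "y \<subseteq> Q" for x y
    using orthonormal_rows_if_orthonormal_columns[of "Pow Q" G x y] gd(2,3) that by simp
  then show ?thesis using assms unfolding gg gate_adj_eq is_gate_def by simp
qed

lemma gate_apply_gate_adj:
  assumes "is_gate n g"
  shows "gate_apply (gate_adj g) (gate_apply g v) = v"
proof
  fix b
  obtain Q G where gg: "g = (Q, G)" by (cases g) auto
  note gd = is_gateD[OF assms[unfolded gg]]
  have "gate_apply (gate_adj g) (gate_apply g v) b
      = (\<Sum>y'\<in>Pow Q. \<Sum>y\<in>Pow Q. cnj (G y' (b \<inter> Q)) * (G y' y * v ((b - Q) \<union> y)))"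
    unfolding gg gate_adj_eq gate_apply_eq
  proof (intro sum.cong refl)
    fix y' assume y': "y' \<in> Pow Q"
    have e1: "((b - Q) \<union> y') \<inter> Q = y'" using y' by blast
    have e2: "\<And>y. (((b - Q) \<union> y') - Q) \<union> y = (b - Q) \<union> y" using y' by blast
    show "cnj (G y' (b \<inter> Q)) * (\<Sum>y\<in>Pow Q. G (((b - Q) \<union> y') \<inter> Q) y * v (((b - Q) \<union> y') - Q \<union> y))
        = (\<Sum>y\<in>Pow Q. cnj (G y' (b \<inter> Q)) * (G y' y * v ((b - Q) \<union> y)))"
      unfolding e1 e2 by (simp add: sum_distrib_left)
  qed
  also have "\<dots> = (\<Sum>y\<in>Pow Q. (\<Sum>y'\<in>Pow Q. cnj (G y' (b \<inter> Q)) * G y' y) * v ((b - Q) \<union> y))"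
    by (subst sum.swap) (simp add: sum_distrib_right mult.assoc)
  also have "\<dots> = (\<Sum>y\<in>Pow Q. if b \<inter> Q = y then v ((b - Q) \<union> y) else 0)"
    by (intro sum.cong refl) (simp add: gd(3))
  also have "\<dots> = v ((b - Q) \<union> (b \<inter> Q))" using gd(2) by (simp add: sum.delta)
  also have "(b - Q) \<union> (b \<inter> Q) = b" by blast
  finally show "gate_apply (gate_adj g) (gate_apply g v) b = v b" .
qed

definition circuit_inv :: "gate list \<Rightarrow> gate list" where
  "circuit_inv U = rev (map gate_adj U)"

lemma circuit_inv_gates:
  assumes "\<forall>g\<in>set U. is_gate n g"
  shows "\<forall>g\<in>set (circuit_inv U). is_gate n g"
  using assms by (auto simp: circuit_inv_def is_gate_gate_adj)

lemma circuit_apply_inv_left: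
  assumes "\<forall>g\<in>set U. is_gate n g"
  shows "circuit_apply (circuit_inv U) (circuit_apply U v) = v"
  using assms
proof (induction U arbitrary: v)
  case Nil then show ?case by (simp add: circuit_inv_def circuit_apply_Nil)
next
  case (Cons g gs)
  have "circuit_apply (circuit_inv (g # gs)) (circuit_apply (g # gs) v)
      = gate_apply (gate_adj g) (circuit_apply (circuit_inv gs) (circuit_apply gs (gate_apply g v)))"
    by (simp add: circuit_inv_def circuit_apply_append circuit_apply_Cons circuit_apply_Nil)
  also have "\<dots> = gate_apply (gate_adj g) (gate_apply g v)" using Cons by simp
  also have "\<dots> = v" using Cons.prems gate_apply_gate_adj[of n g] by simp
  finally show ?case .
qed

lemma circuit_apply_inv_right:
  assumes "\<forall>g\<in>set U. is_gate n g"
  shows "circuit_apply U (circuit_apply (circuit_inv U) v) = v"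
  using assms
proof (induction U arbitrary: v)
  case Nil then show ?case by (simp add: circuit_inv_def circuit_apply_Nil)
next
  case (Cons g gs)
  have "circuit_apply (g # gs) (circuit_apply (circuit_inv (g # gs)) v)
      = circuit_apply gs (gate_apply g (gate_apply (gate_adj g) (circuit_apply (circuit_inv gs) v)))"
    by (simp add: circuit_inv_def circuit_apply_append circuit_apply_Cons circuit_apply_Nil)
  also have "gate_apply g (gate_apply (gate_adj g) (circuit_apply (circuit_inv gs) v)) = circuit_apply (circuit_inv gs) v"
    using gate_apply_gate_adj[OF is_gate_gate_adj[of n g]] Cons.prems by (simp add: gate_adj_gate_adj)
  finally show ?case using Cons by simp
qed

lemma back_lc_append: "back_lc (xs @ ys) S = back_lc xs (back_lc ys S)"
  by (induction xs) auto

lemma lc_step_gate_adj: "lc_step (gate_adj g) S = lc_step g S"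
  by (simp add: lc_step_def gate_adj_def)

lemma back_lc_circuit_inv: "back_lc (circuit_inv U) S = fwd_lc U S"
proof (induction U arbitrary: S)
  case Nil then show ?case by (simp add: circuit_inv_def)
next
  case (Cons g gs)
  show ?case using Cons by (simp add: circuit_inv_def back_lc_append lc_step_gate_adj)
qed

lemma back_lc_empty: "back_lc U {} = {}"
  by (induction U) (auto simp: lc_step_def)

lemma fwd_lc_empty: "fwd_lc U {} = {}"
  by (induction U) (auto simp: lc_step_def)

lemma card_lightcones_le_blowup:
  assumes "\<forall>g\<in>set U. is_gate n g" "S \<subseteq> {..<n}"
  shows "card (back_lc U S) \<le> blowup n U * card S \<and> card (fwd_lc U S) \<le> blowup n U * card S"
proof -
  have ex: "\<exists>B. \<forall>S. S \<subseteq> {..<n} \<longrightarrow> card (back_lc U S) \<le> B * card S \<and> card (fwd_lc U S) \<le> B * card S"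
  proof (intro exI allI impI)
    fix S :: "nat set" assume S: "S \<subseteq> {..<n}"
    show "card (back_lc U S) \<le> n * card S \<and> card (fwd_lc U S) \<le> n * card S"
    proof (cases "S = {}")
      case True then show ?thesis by (simp add: back_lc_empty fwd_lc_empty)
    next
      case False
      have "finite S" using S finite_subset by blast
      then have "card S \<ge> 1" using False by (simp add: Suc_le_eq card_gt_0_iff)
      then have n: "n \<le> n * card S" by simp
      have "card (back_lc U S) \<le> n" using card_mono[OF _ back_lc_subset[OF assms(1) S]] by simp
      moreover have "card (fwd_lc U S) \<le> n" using card_mono[OF _ fwd_lc_subset[OF assms(1) S]] by simp
      ultimately show ?thesis using n by linarith
    qed
  qed
  show ?thesis using LeastI_ex[OF ex] assms(2) unfolding blowup_def by blast
qed

section \<open>Stabilizer states\<close>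

lemma stab_code_sum:
  assumes "\<forall>i<k. vs i \<in> stab_code n m \<phi>"
  shows "(\<lambda>b. \<Sum>i<k. c i * vs i b) \<in> stab_code n m \<phi>"
  using assms unfolding stab_code_def is_state_def by (auto simp: pauli_apply_sum pauli_apply_scale)

lemma stab_code_scale: "v \<in> stab_code n m \<phi> \<Longrightarrow> (\<lambda>b. c * v b) \<in> stab_code n m \<phi>"
  unfolding stab_code_def is_state_def by (auto simp: pauli_apply_scale)

locale stabilizer_state =
  fixes n :: nat and \<phi> :: vec
  assumes stab: "is_stabilizer_state n \<phi>"
begin

abbreviation "S \<equiv> stab_group n \<phi>"

lemma is_state_phi: "is_state n \<phi>"
  using stab by (simp add: is_stabilizer_state_def is_pure_state_def)

lemma cinner_phi_phi: "cinner n \<phi> \<phi> = 1"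
  using stab by (simp add: is_stabilizer_state_def is_pure_state_iff)

lemma scalar_eq_1_if_fixes_phi:
  assumes "(\<lambda>b. c * \<phi> b) = \<phi>"
  shows "c = 1"
proof -
  obtain b0 where b0: "\<phi> b0 \<noteq> 0" using ex_nonzero_if_cinner_self_eq_1[OF cinner_phi_phi] by blast
  have "c * \<phi> b0 = \<phi> b0" using fun_cong[OF assms, of b0] by simp
  then show ?thesis using b0 by simp
qed

lemma stab_iff: "s \<in> S \<longleftrightarrow> is_pauli n s \<and> pauli_apply s \<phi> = \<phi>"
  by (simp add: stab_group_def)

lemma finite_stab: "finite S"
proof -
  have "S \<subseteq> {..<4} \<times> Pow {..<n} \<times> Pow {..<n}"
    by (auto simp: stab_group_def is_pauli_def)
  then show ?thesis by (rule finite_subset) simp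
qed

lemma card_stab: "card S = 2 ^ n"
  using stab by (simp add: is_stabilizer_state_def)

lemma stab_is_pauli: "s \<in> S \<Longrightarrow> is_pauli n s"
  by (simp add: stab_iff)

lemma stab_fixes_phi: "s \<in> S \<Longrightarrow> pauli_apply s \<phi> = \<phi>"
  by (simp add: stab_iff)

lemma stab_involution:
  assumes "s \<in> S"
  shows "pauli_apply s (pauli_apply s v) = v"
proof -
  obtain k x z where s: "s = (k, x, z)" by (cases s) auto
  have fz: "finite z" using is_pauliD(5) stab_is_pauli[OF assms] s by blast
  define c where "c = \<i> ^ (k + k) * (-1) ^ card (z \<inter> x)"
  have sq: "pauli_apply s (pauli_apply s w) = (\<lambda>b. c * w b)" for w
    unfolding s c_def pauli_apply_square[OF fz] by simp
  have "(\<lambda>b. c * \<phi> b) = \<phi>" using sq[of \<phi>] stab_fixes_phi[OF assms] by simp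
  then have "c = 1" by (rule scalar_eq_1_if_fixes_phi)
  then show ?thesis using sq[of v] by simp
qed

lemma stab_self_adjoint:
  assumes "s \<in> S"
  shows "cinner n (pauli_apply s u) w = cinner n u (pauli_apply s w)"
proof -
  have "cinner n (pauli_apply s u) w = cinner n (pauli_apply s u) (pauli_apply s (pauli_apply s w))"
    by (simp add: stab_involution[OF assms])
  also have "\<dots> = cinner n u (pauli_apply s w)" by (rule cinner_pauli_apply[OF stab_is_pauli[OF assms]])
  finally show ?thesis .
qed

lemma pmul_in_stab: "s \<in> S \<Longrightarrow> t \<in> S \<Longrightarrow> pmul s t \<in> S"
  unfolding stab_iff using pauli_apply_pmul is_pauli_pmul by metis

lemma stab_phase_unique:
  assumes "(k, x, z) \<in> S" "(k', x, z) \<in> S"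
  shows "k = k'"
proof -
  have "pauli_apply (k, x, z) \<phi> = \<phi>" "pauli_apply (k', x, z) \<phi> = \<phi>" using assms stab_fixes_phi by blast+
  then have e: "(\<lambda>b. \<i> ^ k * pauli_apply (0, x, z) \<phi> b) = (\<lambda>b. \<i> ^ k' * pauli_apply (0, x, z) \<phi> b)"
    using pauli_apply_phase[of k x z \<phi>] pauli_apply_phase[of k' x z \<phi>] by simp
  have "pauli_apply (0, x, z) \<phi> \<noteq> (\<lambda>b. 0)"
  proof
    assume "pauli_apply (0, x, z) \<phi> = (\<lambda>b. 0)"
    then have "pauli_apply (k, x, z) \<phi> = (\<lambda>b. 0)" using pauli_apply_phase[of k x z \<phi>] by simp
    then have "\<phi> = (\<lambda>b. 0)" using stab_fixes_phi[OF assms(1)] by simp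
    then show False using cinner_phi_phi by (simp add: cinner_def)
  qed
  then obtain b where "pauli_apply (0, x, z) \<phi> b \<noteq> 0" by auto
  then have "\<i> ^ k = \<i> ^ k'" using fun_cong[OF e, of b] by simp
  moreover have "k < 4" "k' < 4" using assms stab_is_pauli by (auto simp: is_pauli_def)
  ultimately show ?thesis using i_power_inj by blast
qed

lemma inj_on_pmul_stab:
  assumes "s \<in> S"
  shows "inj_on (pmul s) S"
proof (rule inj_onI)
  fix t t' assume t: "t \<in> S" and t': "t' \<in> S" and e: "pmul s t = pmul s t'"
  obtain k x z where s: "s = (k, x, z)" by (cases s) auto
  obtain k1 x1 z1 where t1: "t = (k1, x1, z1)" by (cases t) auto
  obtain k2 x2 z2 where t2: "t' = (k2, x2, z2)" by (cases t') auto
  have "sym_diff x x1 = sym_diff x x2" "sym_diff z z1 = sym_diff z z2"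
    using e unfolding s t1 t2 pmul_def by simp_all
  then have "x1 = x2" "z1 = z2" by blast+
  then have "k1 = k2" using stab_phase_unique t t' t1 t2 by blast
  then show "t = t'" using t1 t2 \<open>x1 = x2\<close> \<open>z1 = z2\<close> by simp
qed

lemma pmul_stab_image:
  assumes "s \<in> S"
  shows "pmul s ` S = S"
  by (rule endo_inj_surj[OF finite_stab]) (use pmul_in_stab[OF assms] inj_on_pmul_stab[OF assms] in auto)

lemma sum_stab_pmul_reindex:
  assumes "s \<in> S"
  shows "(\<Sum>t\<in>S. f (pmul s t)) = (\<Sum>t\<in>S. f t)"
proof -
  have "(\<Sum>t\<in>pmul s ` S. f t) = (\<Sum>t\<in>S. f (pmul s t))"
    by (simp add: sum.reindex[OF inj_on_pmul_stab[OF assms]])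
  then show ?thesis using pmul_stab_image[OF assms] by simp
qed

definition stab_proj :: "vec \<Rightarrow> vec" where
  "stab_proj w = (\<lambda>a. (1 / 2 ^ n) * (\<Sum>s\<in>S. pauli_apply s w a))"

lemma stab_proj_phi: "stab_proj \<phi> = \<phi>"
  unfolding stab_proj_def by (simp add: stab_fixes_phi card_stab)

lemma is_state_stab_proj: "is_state n w \<Longrightarrow> is_state n (stab_proj w)"
  unfolding stab_proj_def is_state_def
  using is_state_pauli_apply[OF stab_is_pauli] by (simp add: is_state_def)

lemma stab_apply_stab_proj:
  assumes "s \<in> S"
  shows "pauli_apply s (stab_proj w) = stab_proj w"
proof -
  have "pauli_apply s (stab_proj w) = (\<lambda>a. (1 / 2 ^ n) * (\<Sum>t\<in>S. pauli_apply (pmul s t) w a))"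
    unfolding stab_proj_def pauli_apply_scale pauli_apply_sum
    using pauli_apply_pmul[OF stab_is_pauli[OF assms] stab_is_pauli] by simp
  also have "\<dots> = stab_proj w"
    unfolding stab_proj_def using sum_stab_pmul_reindex[OF assms, of "\<lambda>t. pauli_apply t w _"] by simp
  finally show ?thesis .
qed

lemma stab_proj_expand:
  assumes "is_state n w" "a \<subseteq> {..<n}"
  shows "stab_proj w a = (\<Sum>c\<in>Pow {..<n}. w c * stab_proj (basis_vec c) a)"
proof -
  have "stab_proj w a = (1 / 2 ^ n) * (\<Sum>s\<in>S. \<Sum>c\<in>Pow {..<n}. w c * pauli_apply s (basis_vec c) a)"
    unfolding stab_proj_def using pauli_apply_expand[OF stab_is_pauli assms] by simp
  also have "\<dots> = (\<Sum>c\<in>Pow {..<n}. w c * stab_proj (basis_vec c) a)"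
    unfolding stab_proj_def by (subst sum.swap) (simp add: sum_distrib_left algebra_simps)
  finally show ?thesis .
qed

lemma stab_proj_idem: "stab_proj (stab_proj w) = stab_proj w"
proof
  fix a
  have "stab_proj (stab_proj w) a = (1 / 2 ^ n) * (\<Sum>s\<in>S. stab_proj w a)"
    unfolding stab_proj_def[of "stab_proj w"] using stab_apply_stab_proj by simp
  also have "\<dots> = stab_proj w a" using card_stab by simp
  finally show "stab_proj (stab_proj w) a = stab_proj w a" .
qed

lemma stab_basis_vec_hermitian:
  assumes "s \<in> S" "a \<subseteq> {..<n}" "b \<subseteq> {..<n}"
  shows "pauli_apply s (basis_vec a) b = cnj (pauli_apply s (basis_vec b) a)"
proof -
  have "cinner n (pauli_apply s (basis_vec b)) (basis_vec a) = cinner n (basis_vec b) (pauli_apply s (basis_vec a))"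
    by (rule stab_self_adjoint[OF assms(1)])
  then show ?thesis using cinner_basis_vec_left[OF assms(3)] cinner_basis_vec_right[OF assms(2)] by simp
qed

lemma stab_proj_hermitian:
  assumes "a \<subseteq> {..<n}" "b \<subseteq> {..<n}"
  shows "stab_proj (basis_vec a) b = cnj (stab_proj (basis_vec b) a)"
  unfolding stab_proj_def using stab_basis_vec_hermitian[OF _ assms] by (simp add: cnj_sum)

lemma identity_in_stab: "(0, {}, {}) \<in> S"
  by (simp add: stab_iff pauli_apply_id is_pauli_def)

lemma stab_trace:
  assumes "s \<in> S"
  shows "(\<Sum>a\<in>Pow {..<n}. pauli_apply s (basis_vec a) a) = (if s = (0, {}, {}) then 2 ^ n else 0)"
proof -
  obtain k x z where s: "s = (k, x, z)" by (cases s) auto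
  have tr: "(\<Sum>a\<in>Pow {..<n}. pauli_apply s (basis_vec a) a) = (if x = {} \<and> z = {} then \<i> ^ k * 2 ^ n else 0)"
    unfolding s by (rule pauli_trace) (use stab_is_pauli[OF assms] s in simp)
  show ?thesis
  proof (cases "x = {} \<and> z = {}")
    case True
    have "(\<lambda>b. \<i> ^ k * \<phi> b) = \<phi>"
      using stab_fixes_phi[OF assms] pauli_apply_phase[of k "{}" "{}" \<phi>] True s by (simp add: pauli_apply_id)
    then have "\<i> ^ k = 1" by (rule scalar_eq_1_if_fixes_phi)
    moreover have "k < 4" using stab_is_pauli[OF assms] s by (simp add: is_pauli_def)
    ultimately have "k = 0" using i_power_inj[of k 0] by simp
    then show ?thesis using tr True s by simp
  next
    case False
    then show ?thesis using tr s by auto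
  qed
qed

lemma stab_proj_trace: "(\<Sum>a\<in>Pow {..<n}. stab_proj (basis_vec a) a) = 1"
proof -
  have "(\<Sum>a\<in>Pow {..<n}. stab_proj (basis_vec a) a) = (1 / 2 ^ n) * (\<Sum>s\<in>S. \<Sum>a\<in>Pow {..<n}. pauli_apply s (basis_vec a) a)"
    unfolding stab_proj_def by (subst sum.swap) (simp add: sum_distrib_left)
  also have "\<dots> = (1 / 2 ^ n) * (\<Sum>s\<in>S. if s = (0, {}, {}) then 2 ^ n else 0)"
    using stab_trace by simp
  also have "\<dots> = 1" using identity_in_stab finite_stab by (simp add: sum.delta)
  finally show ?thesis .
qed

text \<open>Since \<open>card S = 2 ^ n\<close>, the group average \<open>stab_proj\<close> has trace one, so it is the projection
  onto \<open>\<phi>\<close>.\<close>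

lemma stab_proj_basis_vec:
  assumes "a \<subseteq> {..<n}" "c \<subseteq> {..<n}"
  shows "stab_proj (basis_vec c) a = \<phi> a * cnj (\<phi> c)"
proof (rule projection_onto_fixed_unit_vector[where P = "\<lambda>a c. stab_proj (basis_vec c) a"])
  show "finite (Pow {..<n})" by simp
  show "stab_proj (basis_vec a) b = cnj (stab_proj (basis_vec b) a)"
    if "a \<in> Pow {..<n}" "b \<in> Pow {..<n}" for a b
    using that by (intro stab_proj_hermitian) auto
  show "(\<Sum>b\<in>Pow {..<n}. stab_proj (basis_vec b) a * stab_proj (basis_vec c) b) = stab_proj (basis_vec c) a"
    if "a \<in> Pow {..<n}" "c \<in> Pow {..<n}" for a c
    using stab_proj_expand[OF is_state_stab_proj[OF is_state_basis_vec], of c a] that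
    by (simp add: mult.commute stab_proj_idem)
  show "(\<Sum>a\<in>Pow {..<n}. stab_proj (basis_vec a) a) = 1" by (rule stab_proj_trace)
  show "(\<Sum>b\<in>Pow {..<n}. cnj (\<phi> b) * \<phi> b) = 1" using cinner_phi_phi by (simp add: cinner_def)
  show "(\<Sum>b\<in>Pow {..<n}. stab_proj (basis_vec b) a * \<phi> b) = \<phi> a" if "a \<in> Pow {..<n}" for a
    using stab_proj_expand[OF is_state_phi, of a] that by (simp add: stab_proj_phi mult.commute)
qed (use assms in auto)

lemma stab_proj_eq:
  assumes "is_state n w"
  shows "stab_proj w = (\<lambda>a. cinner n \<phi> w * \<phi> a)"
proof
  fix a
  show "stab_proj w a = cinner n \<phi> w * \<phi> a"
  proof (cases "a \<subseteq> {..<n}")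
    case True
    have "stab_proj w a = (\<Sum>c\<in>Pow {..<n}. w c * (\<phi> a * cnj (\<phi> c)))"
      using stab_proj_expand[OF assms True] stab_proj_basis_vec[OF True] by simp
    also have "\<dots> = cinner n \<phi> w * \<phi> a" unfolding cinner_def sum_distrib_right
      by (intro sum.cong refl) (simp add: algebra_simps)
    finally show ?thesis .
  next
    case False
    have "stab_proj w a = 0" using is_state_stab_proj[OF assms] False by (simp add: is_state_def)
    moreover have "\<phi> a = 0" using is_state_phi False by (simp add: is_state_def)
    ultimately show ?thesis by simp
  qed
qed

lemma pauli_apply_phi_if_commutes:
  assumes Q: "is_pauli n Q" and comm: "\<And>s. s \<in> S \<Longrightarrow> even (pauli_symp s Q)"
  shows "pauli_apply Q \<phi> = (\<lambda>a. cinner n \<phi> (pauli_apply Q \<phi>) * \<phi> a)"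
proof -
  have "pauli_apply Q \<phi> = pauli_apply Q (stab_proj \<phi>)" by (simp add: stab_proj_phi)
  also have "\<dots> = stab_proj (pauli_apply Q \<phi>)"
    unfolding stab_proj_def pauli_apply_scale pauli_apply_sum
    using pauli_apply_commute[OF stab_is_pauli Q] comm by simp
  also have "\<dots> = (\<lambda>a. cinner n \<phi> (pauli_apply Q \<phi>) * \<phi> a)"
    by (rule stab_proj_eq[OF is_state_pauli_apply[OF Q is_state_phi]])
  finally show ?thesis .
qed

lemma commutes_with_stab_if_expectation_nonzero:
  assumes "is_pauli n Q" "cinner n \<phi> (pauli_apply Q \<phi>) \<noteq> 0" "s \<in> S"
  shows "even (pauli_symp s Q)"
  using cinner_pauli_apply_eq_0_if_anticommute[OF stab_is_pauli[OF assms(3)] assms(1) _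
      stab_fixes_phi[OF assms(3)]] assms(2) by blast

lemma pauli_eigenvalue_phi_square:
  assumes "finite z" and eig: "pauli_apply (0, x, z) \<phi> = (\<lambda>a. c * \<phi> a)"
  shows "c * c = 1 \<or> c * c = -1"
proof -
  define \<sigma> :: complex where "\<sigma> = (-1) ^ card (z \<inter> x)"
  have sq: "c * c * \<phi> a = \<sigma> * \<phi> a" for a
    using fun_cong[OF pauli_apply_square[OF assms(1), of 0 x \<phi>], of a]
    by (simp add: eig pauli_apply_scale mult.assoc \<sigma>_def)
  have "(\<lambda>a. (c * c * \<sigma>) * \<phi> a) = \<phi>"
  proof
    fix a
    have "(c * c * \<sigma>) * \<phi> a = \<sigma> * (c * c * \<phi> a)" by (simp add: algebra_simps)
    also have "\<dots> = \<phi> a" unfolding sq \<sigma>_def by simp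
    finally show "(c * c * \<sigma>) * \<phi> a = \<phi> a" .
  qed
  then have "c * c * \<sigma> = 1" by (rule scalar_eq_1_if_fixes_phi)
  then show ?thesis unfolding \<sigma>_def by (cases "even (card (z \<inter> x))") (auto simp: minus_equation_iff)
qed

lemma ex_stab_if_expectation_nonzero:
  assumes Q: "is_pauli n (0, x, z)" and nz: "cinner n \<phi> (pauli_apply (0, x, z) \<phi>) \<noteq> 0"
  obtains k where "(k, x, z) \<in> S" "\<i> ^ k * cinner n \<phi> (pauli_apply (0, x, z) \<phi>) = 1"
proof -
  define c where "c = cinner n \<phi> (pauli_apply (0, x, z) \<phi>)"
  have eig: "pauli_apply (0, x, z) \<phi> = (\<lambda>a. c * \<phi> a)"
    unfolding c_def
    by (rule pauli_apply_phi_if_commutes[OF Q commutes_with_stab_if_expectation_nonzero[OF Q nz]])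
  obtain k where k: "k < 4" "\<i> ^ k * c = 1"
    using pauli_eigenvalue_phi_square[OF is_pauliD(5)[OF Q] eig] by (rule ex_i_power_mult_eq_1)
  have "pauli_apply (k, x, z) \<phi> = \<phi>"
    unfolding pauli_apply_phase[of k] eig using k(2) by (simp add: mult.assoc[symmetric])
  moreover have "is_pauli n (k, x, z)" using Q k(1) by (simp add: is_pauli_def)
  ultimately show ?thesis using that k(2) unfolding c_def by (simp add: stab_iff)
qed

text \<open>Conjugation by \<open>Q\<close> multiplies the expectation of a Pauli operator \<open>P\<close> by \<open>(-1) ^ pauli_symp P Q\<close>.
  If this sign is \<open>-1\<close>, the expectation in \<open>\<phi>\<close> vanishes: otherwise \<open>P\<close> would be a stabilizer up to
  phase, of weight at most \<open>m\<close>, and so commute with \<open>Q\<close>.\<close>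

lemma rdm_pauli_apply_phi:
  assumes Q: "is_pauli n Q" and comm: "\<And>s. s \<in> S \<Longrightarrow> pauli_weight s \<le> m \<Longrightarrow> even (pauli_symp s Q)"
    and L: "L \<subseteq> {..<n}" "card L \<le> m"
  shows "rdm n L (pauli_apply Q \<phi>) = rdm n L \<phi>"
proof (rule rdm_eq_if_pauli_expectations_eq[OF L(1)])
  fix x z assume xz: "x \<subseteq> L" "z \<subseteq> L"
  define P where "P = (0::nat, x, z)"
  have P: "is_pauli n P" using xz L unfolding P_def by (auto simp: is_pauli_def)
  have "cinner n (pauli_apply Q \<phi>) (pauli_apply P (pauli_apply Q \<phi>))
      = (-1) ^ pauli_symp P Q * cinner n \<phi> (pauli_apply P \<phi>)"
    unfolding pauli_apply_commute[OF P Q] cinner_scale_right cinner_pauli_apply[OF Q] ..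
  also have "\<dots> = cinner n \<phi> (pauli_apply P \<phi>)"
  proof (cases "even (pauli_symp P Q)")
    case False
    have "cinner n \<phi> (pauli_apply P \<phi>) = 0"
    proof (rule ccontr)
      assume "cinner n \<phi> (pauli_apply P \<phi>) \<noteq> 0"
      then obtain k where k: "(k, x, z) \<in> S"
        using ex_stab_if_expectation_nonzero P unfolding P_def by blast
      have "finite L" using L(1) finite_subset by blast
      then have "pauli_weight (k, x, z) \<le> m" using order_trans[OF pauli_weight_le[OF xz] L(2)] by blast
      then show False using comm[OF k] False pauli_symp_phase_left[of k x z Q 0] by (simp add: P_def)
    qed
    then show ?thesis by simp
  qed simp
  finally show "cinner n (pauli_apply Q \<phi>) (pauli_apply (0, x, z) (pauli_apply Q \<phi>))
      = cinner n \<phi> (pauli_apply (0, x, z) \<phi>)" unfolding P_def .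
qed

end

section \<open>Correctable subspaces\<close>

text \<open>\<open>kraus_slice n F Ks v j a\<close> is the Kraus operator \<open>Ks ! j\<close> applied to the part of \<open>v\<close> whose
  qubits in \<open>F\<close> are in the basis state \<open>a\<close>.\<close>

definition kraus_slice :: "nat \<Rightarrow> nat set \<Rightarrow> op list \<Rightarrow> vec \<Rightarrow> nat \<Rightarrow> nat set \<Rightarrow> nat set \<Rightarrow> complex" where
  "kraus_slice n F Ks v j a x = (\<Sum>z\<in>Pow ({..<n} - F). (Ks ! j) x z * v (z \<union> a))"

lemma kraus_slice_add: "kraus_slice n F Ks (\<lambda>b. u b + w b) j a x = kraus_slice n F Ks u j a x + kraus_slice n F Ks w j a x"
  by (simp add: kraus_slice_def algebra_simps sum.distrib)

lemma kraus_slice_scale: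
  assumes "a \<subseteq> F" "F \<subseteq> {..<n}" "\<And>b. b \<subseteq> {..<n} \<Longrightarrow> u b = c * w b"
  shows "kraus_slice n F Ks u j a x = c * kraus_slice n F Ks w j a x"
  unfolding kraus_slice_def sum_distrib_left
proof (intro sum.cong refl)
  fix z assume "z \<in> Pow ({..<n} - F)"
  then have "z \<union> a \<subseteq> {..<n}" using assms by auto
  then show "(Ks ! j) x z * u (z \<union> a) = c * ((Ks ! j) x z * w (z \<union> a))" using assms(3) by simp
qed

lemma kraus_apply_ptrace_eq:
  assumes F: "F \<subseteq> {..<n}" and x: "x \<subseteq> {..<n}" and y: "y \<subseteq> {..<n}"
  shows "kraus_apply n F Ks (ptrace n F v) x y
       = (\<Sum>j<length Ks. \<Sum>a\<in>Pow F. kraus_slice n F Ks v j a x * cnj (kraus_slice n F Ks v j a y))"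
proof -
  define A' where "A' = {..<n} - F"
  have NA: "{..<n} - A' = F" using F unfolding A'_def by blast
  have "kraus_apply n F Ks (ptrace n F v) x y
      = (\<Sum>j<length Ks. \<Sum>u\<in>Pow A'. \<Sum>w\<in>Pow A'. (Ks ! j) x u * rdm n A' v u w * cnj ((Ks ! j) y w))"
    unfolding kraus_apply_def ptrace_def A'_def using x y by (simp add: sum_list_sum_nth atLeast0LessThan)
  also have "\<dots> = (\<Sum>j<length Ks. \<Sum>a\<in>Pow F. kraus_slice n F Ks v j a x * cnj (kraus_slice n F Ks v j a y))"
  proof (rule sum.cong[OF refl])
    fix j
    have "(\<Sum>u\<in>Pow A'. \<Sum>w\<in>Pow A'. (Ks ! j) x u * rdm n A' v u w * cnj ((Ks ! j) y w))
        = (\<Sum>u\<in>Pow A'. \<Sum>w\<in>Pow A'. \<Sum>a\<in>Pow F. ((Ks ! j) x u * v (u \<union> a)) * cnj ((Ks ! j) y w * v (w \<union> a)))"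
    proof (intro sum.cong refl)
      fix u w assume "u \<in> Pow A'" "w \<in> Pow A'"
      then show "(Ks ! j) x u * rdm n A' v u w * cnj ((Ks ! j) y w)
          = (\<Sum>a\<in>Pow F. ((Ks ! j) x u * v (u \<union> a)) * cnj ((Ks ! j) y w * v (w \<union> a)))"
        unfolding rdm_def NA by (simp add: sum_distrib_left sum_distrib_right algebra_simps)
    qed
    also have "\<dots> = (\<Sum>a\<in>Pow F. \<Sum>u\<in>Pow A'. \<Sum>w\<in>Pow A'. ((Ks ! j) x u * v (u \<union> a)) * cnj ((Ks ! j) y w * v (w \<union> a)))"
      by (rule sum_swap3[symmetric])
    also have "\<dots> = (\<Sum>a\<in>Pow F. kraus_slice n F Ks v j a x * cnj (kraus_slice n F Ks v j a y))"
      unfolding kraus_slice_def A'_def[symmetric] by (simp add: sum_product cnj_sum)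
    finally show "(\<Sum>u\<in>Pow A'. \<Sum>w\<in>Pow A'. (Ks ! j) x u * rdm n A' v u w * cnj ((Ks ! j) y w))
        = (\<Sum>a\<in>Pow F. kraus_slice n F Ks v j a x * cnj (kraus_slice n F Ks v j a y))" .
  qed
  finally show ?thesis .
qed

lemma kraus_completeness:
  assumes "is_kraus n F Ks" "z \<subseteq> {..<n} - F" "z' \<subseteq> {..<n} - F"
  shows "(\<Sum>j<length Ks. \<Sum>x\<in>Pow {..<n}. (Ks ! j) x z * cnj ((Ks ! j) x z')) = (if z = z' then 1 else 0)"
proof -
  have "(\<Sum>j<length Ks. \<Sum>x\<in>Pow {..<n}. cnj ((Ks ! j) x z) * (Ks ! j) x z') = (if z = z' then 1 else 0)"
    using assms unfolding is_kraus_def by (simp add: sum_list_sum_nth atLeast0LessThan)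
  then have "cnj (\<Sum>j<length Ks. \<Sum>x\<in>Pow {..<n}. cnj ((Ks ! j) x z) * (Ks ! j) x z') = (if z = z' then 1 else 0)"
    by simp
  then show ?thesis by (simp add: cnj_sum mult.commute)
qed

lemma rdm_eq_sum_kraus_slice:
  assumes F: "F \<subseteq> {..<n}" and K: "is_kraus n F Ks" and a: "a \<subseteq> F" and b: "b \<subseteq> F"
  shows "rdm n F v a b = (\<Sum>j<length Ks. \<Sum>x\<in>Pow {..<n}. kraus_slice n F Ks v j a x * cnj (kraus_slice n F Ks v j b x))"
proof -
  define A' where "A' = {..<n} - F"
  define T where "T z z' = v (z \<union> a) * cnj (v (z' \<union> b))" for z z'
  have "(\<Sum>j<length Ks. \<Sum>x\<in>Pow {..<n}. kraus_slice n F Ks v j a x * cnj (kraus_slice n F Ks v j b x))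
      = (\<Sum>j<length Ks. \<Sum>x\<in>Pow {..<n}. \<Sum>z\<in>Pow A'. \<Sum>z'\<in>Pow A'. ((Ks ! j) x z * cnj ((Ks ! j) x z')) * T z z')"
    unfolding kraus_slice_def A'_def[symmetric] sum_mult_cnj_sum T_def
    by (intro sum.cong refl) (simp add: algebra_simps)
  also have "\<dots> = (\<Sum>j<length Ks. \<Sum>z\<in>Pow A'. \<Sum>z'\<in>Pow A'. \<Sum>x\<in>Pow {..<n}. ((Ks ! j) x z * cnj ((Ks ! j) x z')) * T z z')"
    by (rule sum.cong[OF refl], rule sum_swap3)
  also have "\<dots> = (\<Sum>z\<in>Pow A'. \<Sum>z'\<in>Pow A'. \<Sum>j<length Ks. \<Sum>x\<in>Pow {..<n}. ((Ks ! j) x z * cnj ((Ks ! j) x z')) * T z z')"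
    by (rule sum_swap3)
  also have "\<dots> = (\<Sum>z\<in>Pow A'. \<Sum>z'\<in>Pow A'. (\<Sum>j<length Ks. \<Sum>x\<in>Pow {..<n}. (Ks ! j) x z * cnj ((Ks ! j) x z')) * T z z')"
    by (simp add: sum_distrib_right)
  also have "\<dots> = (\<Sum>z\<in>Pow A'. \<Sum>z'\<in>Pow A'. if z = z' then T z z' else 0)"
    using K unfolding A'_def by (intro sum.cong refl) (simp add: kraus_completeness)
  also have "\<dots> = rdm n F v a b"
    using a b unfolding rdm_def A'_def T_def by (simp add: sum.delta' Un_commute)
  finally show ?thesis by simp
qed

lemma kraus_slice_proportional:
  assumes F: "F \<subseteq> {..<n}"
    and hexp: "\<And>x y. x \<subseteq> {..<n} \<Longrightarrow> y \<subseteq> {..<n} \<Longrightarrow> kraus_apply n F Ks (ptrace n F v) x y = proj n v x y"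
    and j: "j < length Ks" and a: "a \<subseteq> F"
  shows "\<exists>l. \<forall>x\<in>Pow {..<n}. kraus_slice n F Ks v j a x = l * v x"
proof (cases "\<exists>x0\<in>Pow {..<n}. v x0 \<noteq> 0")
  case True
  then obtain x0 where x0: "x0 \<in> Pow {..<n}" "v x0 \<noteq> 0" by blast
  define I where "I = {..<length Ks} \<times> Pow F"
  have finI: "finite I" unfolding I_def using F by (auto intro: finite_subset)
  have h: "(\<Sum>p\<in>I. kraus_slice n F Ks v (fst p) (snd p) x * cnj (kraus_slice n F Ks v (fst p) (snd p) y)) = v x * cnj (v y)"
    if "x \<in> Pow {..<n}" "y \<in> Pow {..<n}" for x y
  proof -
    have "(\<Sum>p\<in>I. kraus_slice n F Ks v (fst p) (snd p) x * cnj (kraus_slice n F Ks v (fst p) (snd p) y))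
        = (\<Sum>j<length Ks. \<Sum>a\<in>Pow F. kraus_slice n F Ks v j a x * cnj (kraus_slice n F Ks v j a y))"
      unfolding I_def by (simp add: sum.cartesian_product split_beta)
    also have "\<dots> = kraus_apply n F Ks (ptrace n F v) x y"
      using kraus_apply_ptrace_eq[OF F] that by simp
    also have "\<dots> = v x * cnj (v y)" using hexp that by (simp add: proj_def)
    finally show ?thesis .
  qed
  have "(j, a) \<in> I" unfolding I_def using j a by simp
  then have r: "v x0 * kraus_slice n F Ks v j a x = v x * kraus_slice n F Ks v j a x0" if "x \<in> Pow {..<n}" for x
    using rank_one_gram_proportional[OF finI h that x0(1), where i="(j, a)"] by simp
  show ?thesis
  proof (intro exI ballI)
    fix x assume "x \<in> Pow {..<n}"
    then have "v x0 * kraus_slice n F Ks v j a x = v x * kraus_slice n F Ks v j a x0" by (rule r)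
    then show "kraus_slice n F Ks v j a x = kraus_slice n F Ks v j a x0 / v x0 * v x" using x0(2)
      by (simp add: field_simps)
  qed
next
  case False
  show ?thesis
  proof (intro exI ballI)
    fix x
    have "kraus_slice n F Ks v j a x = 0 * kraus_slice n F Ks v j a x"
      by (rule kraus_slice_scale[OF a F]) (use False in auto)
    then show "kraus_slice n F Ks v j a x = 0 * v x" by simp
  qed
qed

lemma kraus_slice_factor_unique:
  assumes F: "F \<subseteq> {..<n}" and a: "a \<subseteq> F"
    and h: "\<And>v. v \<in> C \<Longrightarrow> \<exists>l. \<forall>x\<in>Pow {..<n}. kraus_slice n F Ks v j a x = l * v x"
    and Cadd: "\<And>u w. u \<in> C \<Longrightarrow> w \<in> C \<Longrightarrow> (\<lambda>b. u b + w b) \<in> C"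
    and u: "u \<in> C" "x1 \<in> Pow {..<n}" "u x1 \<noteq> 0" and w: "w \<in> C" "x2 \<in> Pow {..<n}" "w x2 \<noteq> 0"
    and lu: "\<forall>x\<in>Pow {..<n}. kraus_slice n F Ks u j a x = lu * u x"
    and lw: "\<forall>x\<in>Pow {..<n}. kraus_slice n F Ks w j a x = lw * w x"
  shows "lu = lw"
proof -
  obtain ls where ls: "\<forall>x\<in>Pow {..<n}. kraus_slice n F Ks (\<lambda>b. u b + w b) j a x = ls * (u x + w x)"
    using h[OF Cadd[OF u(1) w(1)]] by auto
  have e: "(ls - lu) * u x = (lw - ls) * w x" if "x \<in> Pow {..<n}" for x
    using ls lu lw that kraus_slice_add[of n F Ks u w j a x] by (simp add: algebra_simps)
  show ?thesis
  proof (cases "ls = lu")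
    case True
    then have "(lw - ls) * w x2 = 0" using e[OF w(2)] by simp
    then show ?thesis using w(3) True by simp
  next
    case False
    define \<mu> where "\<mu> = (lw - ls) / (ls - lu)"
    have uw: "u b = \<mu> * w b" if "b \<subseteq> {..<n}" for b
      using e[of b] that False unfolding \<mu>_def by (simp add: field_simps)
    have "kraus_slice n F Ks u j a x1 = \<mu> * kraus_slice n F Ks w j a x1"
      by (rule kraus_slice_scale[OF a F uw])
    then have "lu * u x1 = \<mu> * (lw * w x1)" using lu lw u(2) by simp
    also have "\<dots> = lw * u x1" using uw[of x1] u(2) by simp
    finally show ?thesis using u(3) by simp
  qed
qed

lemma rdm_eq_if_kraus_slices_proportional:
  assumes F: "F \<subseteq> {..<n}" and K: "is_kraus n F Ks" and v: "cinner n v v = 1"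
    and L: "\<And>j a. j < length Ks \<Longrightarrow> a \<subseteq> F \<Longrightarrow> \<forall>x\<in>Pow {..<n}. kraus_slice n F Ks v j a x = L j a * v x"
    and ab: "a \<subseteq> F" "b \<subseteq> F"
  shows "rdm n F v a b = (\<Sum>j<length Ks. L j a * cnj (L j b))"
proof -
  have "rdm n F v a b = (\<Sum>j<length Ks. \<Sum>x\<in>Pow {..<n}. (L j a * v x) * cnj (L j b * v x))"
    unfolding rdm_eq_sum_kraus_slice[OF F K ab] by (intro sum.cong refl) (simp add: L ab)
  also have "\<dots> = (\<Sum>j<length Ks. L j a * cnj (L j b) * cinner n v v)"
    unfolding cinner_def by (intro sum.cong refl) (simp add: sum_distrib_left algebra_simps)
  finally show ?thesis using v by simp
qed

text \<open>Knill--Laflamme: since recovery returns the pure state \<open>|v\<rangle>\<langle>v|\<close>, every Kraus slice of a code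
  vector \<open>v\<close> is a multiple \<open>L j a\<close> of \<open>v\<close>, and by linearity the factor does not depend on \<open>v\<close>.\<close>

lemma correctable_rdm_eq:
  assumes corr: "correctable n C d" and F: "F \<subseteq> {..<n}" "card F < d"
    and Cadd: "\<And>u w. u \<in> C \<Longrightarrow> w \<in> C \<Longrightarrow> (\<lambda>b. u b + w b) \<in> C"
    and u: "u \<in> C" "cinner n u u = 1" and w: "w \<in> C" "cinner n w w = 1"
  shows "rdm n F u = rdm n F w"
proof -
  obtain Ks where K: "is_kraus n F Ks" and rec: "\<forall>v\<in>C. kraus_apply n F Ks (ptrace n F v) = proj n v"
    using corr F unfolding correctable_def by blast
  have h: "\<exists>l. \<forall>x\<in>Pow {..<n}. kraus_slice n F Ks v j a x = l * v x"
    if "v \<in> C" "j < length Ks" "a \<subseteq> F" for v j a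
    by (rule kraus_slice_proportional[OF F(1) _ that(2,3)]) (use rec that(1) in simp)
  obtain x1 where x1: "x1 \<in> Pow {..<n}" "u x1 \<noteq> 0" using ex_nonzero_if_cinner_self_eq_1[OF u(2)] by blast
  obtain x2 where x2: "x2 \<in> Pow {..<n}" "w x2 \<noteq> 0" using ex_nonzero_if_cinner_self_eq_1[OF w(2)] by blast
  define L where "L j a = (SOME l. \<forall>x\<in>Pow {..<n}. kraus_slice n F Ks u j a x = l * u x)" for j a
  have Lu: "\<forall>x\<in>Pow {..<n}. kraus_slice n F Ks u j a x = L j a * u x" if "j < length Ks" "a \<subseteq> F" for j a
    unfolding L_def by (rule someI_ex) (rule h[OF u(1) that])
  have Lw: "\<forall>x\<in>Pow {..<n}. kraus_slice n F Ks w j a x = L j a * w x" if j: "j < length Ks" and a: "a \<subseteq> F" for j a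
  proof -
    obtain lw where lw: "\<forall>x\<in>Pow {..<n}. kraus_slice n F Ks w j a x = lw * w x" using h[OF w(1) j a] by blast
    have "L j a = lw"
      by (rule kraus_slice_factor_unique[OF F(1) a _ Cadd u(1) x1 w(1) x2 Lu[OF j a] lw])
         (rule h, simp_all add: j a)
    then show ?thesis using lw by simp
  qed
  show ?thesis
  proof (rule rdm_eqI)
    fix a b assume ab: "a \<subseteq> F" "b \<subseteq> F"
    have "rdm n F u a b = rdm n F w a b"
      using rdm_eq_if_kraus_slices_proportional[OF F(1) K u(2) Lu ab]
        rdm_eq_if_kraus_slices_proportional[OF F(1) K w(2) Lw ab] by simp
    then show "cross_rdm n F u u a b = cross_rdm n F w w a b" using ab by (simp add: rdm_eq_cross_rdm)
  qed
qed

lemma ex_correctable_gt: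
  assumes "enat m < code_distance n C"
  obtains d where "correctable n C d" "m < d"
  using assms unfolding code_distance_def less_Sup_iff by auto

section \<open>Conjugating the stabilizer code by the circuit\<close>

text \<open>The assumption \<open>locally_indistinguishable\<close> is what \<open>B\<^sup>2 l < d\<^sub>l(\<psi>)\<close> yields through the
  Knill--Laflamme condition; the distance enters the argument only through it.\<close>

locale circuit_stabilizer_code = stabilizer_state +
  fixes U :: "gate list" and l :: nat
  assumes gates: "\<forall>g\<in>set U. is_gate n g"
    and locally_indistinguishable: "\<And>F u. F \<subseteq> {..<n} \<Longrightarrow> card F \<le> blowup n U * (blowup n U * l) \<Longrightarrow>
       u \<in> local_code n l (circuit_apply U \<phi>) \<Longrightarrow> cinner n u u = 1 \<Longrightarrow>
       rdm n F u = rdm n F (circuit_apply U \<phi>)"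
begin

abbreviation "\<psi> \<equiv> circuit_apply U \<phi>"
abbreviation "B \<equiv> blowup n U"
abbreviation "C \<equiv> local_code n l \<psi>"
abbreviation "D \<equiv> stab_code n (B * l) \<phi>"

lemma in_local_code:
  assumes "is_state n \<chi>" "cinner n \<chi> \<chi> = 1"
    and "\<And>A. A \<subseteq> {..<n} \<Longrightarrow> card A \<le> l \<Longrightarrow> rdm n A \<chi> = rdm n A \<psi>"
  shows "\<chi> \<in> C"
  unfolding local_code_def by (rule in_cspan) (use assms in \<open>auto simp: is_pure_state_iff\<close>)

lemma psi_in_local_code: "\<psi> \<in> C"
  using is_state_circuit_apply[OF gates is_state_phi] cinner_circuit_apply[OF gates] cinner_phi_phi
  by (intro in_local_code) simp_all

lemma circuit_apply_in_local_code:
  assumes v: "is_state n v" "cinner n v v = 1"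
    and local_eq: "\<And>L. L \<subseteq> {..<n} \<Longrightarrow> card L \<le> B * l \<Longrightarrow> rdm n L v = rdm n L \<phi>"
  shows "circuit_apply U v \<in> C"
proof (rule in_local_code)
  show "is_state n (circuit_apply U v)" by (rule is_state_circuit_apply[OF gates v(1)])
  show "cinner n (circuit_apply U v) (circuit_apply U v) = 1" using cinner_circuit_apply[OF gates] v(2) by simp
  fix A assume A: "A \<subseteq> {..<n}" "card A \<le> l"
  have "card (back_lc U A) \<le> B * card A" using card_lightcones_le_blowup[OF gates A(1)] by simp
  also have "\<dots> \<le> B * l" using A(2) by simp
  finally have "rdm n (back_lc U A) v = rdm n (back_lc U A) \<phi>"
    by (rule local_eq[OF back_lc_subset[OF gates A(1)]])
  then show "rdm n A (circuit_apply U v) = rdm n A \<psi>" by (rule rdm_circuit_apply_eq[OF gates A(1)])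
qed

lemma rdm_circuit_inv_eq_phi:
  assumes L: "L \<subseteq> {..<n}" "card L \<le> B * l" and u: "u \<in> C" "cinner n u u = 1"
  shows "rdm n L (circuit_apply (circuit_inv U) u) = rdm n L \<phi>"
proof -
  have "card (fwd_lc U L) \<le> B * card L" using card_lightcones_le_blowup[OF gates L(1)] by simp
  also have "\<dots> \<le> B * (B * l)" using L(2) by simp
  finally have "rdm n (fwd_lc U L) u = rdm n (fwd_lc U L) \<psi>"
    by (rule locally_indistinguishable[OF fwd_lc_subset[OF gates L(1)] _ u])
  then have "rdm n L (circuit_apply (circuit_inv U) u) = rdm n L (circuit_apply (circuit_inv U) \<psi>)"
    by (intro rdm_circuit_apply_eq[OF circuit_inv_gates[OF gates] L(1)]) (simp add: back_lc_circuit_inv)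
  then show ?thesis by (simp add: circuit_apply_inv_left[OF gates])
qed

text \<open>If the expectation vanished, \<open>\<phi>' = Q \<phi>\<close> for a Hermitian phase multiple \<open>Q\<close> of the Pauli
  operator would be orthogonal to \<open>\<phi>\<close> and locally indistinguishable from it. Their normalized sum
  is fixed by \<open>Q\<close>, yet, as the pullback of a vector of \<open>C\<close>, it agrees with \<open>\<phi>\<close> on the support of
  \<open>Q\<close>.\<close>

lemma pauli_expectation_phi_nonzero:
  assumes xz: "x \<subseteq> L" "z \<subseteq> L" and L: "L \<subseteq> {..<n}" "card L \<le> B * l"
    and comm: "\<And>s. s \<in> S \<Longrightarrow> pauli_weight s \<le> B * l \<Longrightarrow> even (pauli_symp s (0, x, z))"
  shows "cinner n \<phi> (pauli_apply (0, x, z) \<phi>) \<noteq> 0"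
proof
  assume zero: "cinner n \<phi> (pauli_apply (0, x, z) \<phi>) = 0"
  obtain k where k: "k < 4" "\<And>w. pauli_apply (k, x, z) (pauli_apply (k, x, z) w) = w"
    using pauli_apply_involution[of z x] finite_subset[OF xz(2) finite_subset[OF L(1)]] by blast
  define Q where "Q = (k, x, z)"
  have Q: "is_pauli n Q" using xz L k(1) unfolding Q_def by (auto simp: is_pauli_def)
  define \<phi>' where "\<phi>' = pauli_apply Q \<phi>"
  have \<phi>': "is_state n \<phi>'" "cinner n \<phi>' \<phi>' = 1"
    unfolding \<phi>'_def using is_state_pauli_apply[OF Q is_state_phi] cinner_pauli_apply[OF Q] cinner_phi_phi
    by simp_all
  have orth: "cinner n \<phi> \<phi>' = 0"
    unfolding \<phi>'_def Q_def pauli_apply_phase[of k] cinner_scale_right zero by simp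
  have "circuit_apply U \<phi>' \<in> C"
  proof (rule circuit_apply_in_local_code[OF \<phi>'])
    show "rdm n L' \<phi>' = rdm n L' \<phi>" if "L' \<subseteq> {..<n}" "card L' \<le> B * l" for L'
      unfolding \<phi>'_def using that comm pauli_symp_phase_right[of _ k x z 0]
      by (intro rdm_pauli_apply_phi[OF Q]) (auto simp: Q_def)
  qed
  define r where "r = complex_of_real (1 / sqrt 2)"
  define y where "y = (\<lambda>b. r * \<phi> b + r * \<phi>' b)"
  have ny: "cinner n y y = 1"
    unfolding y_def r_def by (rule cinner_orthonormal_sum[OF cinner_phi_phi \<phi>'(2) orth])
  have "circuit_apply U y = (\<lambda>b. r * \<psi> b + r * circuit_apply U \<phi>' b)"
    unfolding y_def circuit_apply_lincomb ..
  also have "\<dots> \<in> C"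
    using psi_in_local_code \<open>circuit_apply U \<phi>' \<in> C\<close> unfolding local_code_def
    by (rule add_in_cspan[OF scale_in_cspan scale_in_cspan])
  finally have "rdm n L y = rdm n L \<phi>"
    using rdm_circuit_inv_eq_phi[OF L, of "circuit_apply U y"] cinner_circuit_apply[OF gates] ny
    by (simp add: circuit_apply_inv_left[OF gates])
  then have "cinner n y (pauli_apply Q y) = cinner n \<phi> (pauli_apply Q \<phi>)"
    unfolding Q_def by (rule cinner_pauli_apply_eq_if_rdm_eq[OF xz L(1)])
  moreover have "pauli_apply Q y = y"
    unfolding y_def pauli_apply_lincomb \<phi>'_def Q_def k(2) by (simp add: add.commute)
  ultimately show False using ny orth unfolding \<phi>'_def by simp
qed

lemma cinner_pauli_apply_stab_code:
  assumes v: "v \<in> D" "cinner n v v = 1" and xz: "x \<subseteq> L" "z \<subseteq> L"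
    and L: "L \<subseteq> {..<n}" "card L \<le> B * l"
  shows "cinner n v (pauli_apply (0, x, z) v) = cinner n \<phi> (pauli_apply (0, x, z) \<phi>)"
proof -
  have fixed: "pauli_apply P v = v" if "P \<in> S" "pauli_weight P \<le> B * l" for P
    using v(1) that unfolding stab_code_def by auto
  have P: "is_pauli n (0, x, z)" using xz L by (auto simp: is_pauli_def)
  show ?thesis
  proof (cases "\<exists>s\<in>S. pauli_weight s \<le> B * l \<and> odd (pauli_symp s (0, x, z))")
    case True
    then obtain s where s: "s \<in> S" "pauli_weight s \<le> B * l" "odd (pauli_symp s (0, x, z))" by blast
    show ?thesis
      using cinner_pauli_apply_eq_0_if_anticommute[OF stab_is_pauli[OF s(1)] P s(3)]
        fixed[OF s(1,2)] stab_fixes_phi[OF s(1)] by simp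
  next
    case False
    then have "cinner n \<phi> (pauli_apply (0, x, z) \<phi>) \<noteq> 0"
      by (intro pauli_expectation_phi_nonzero[OF xz L]) auto
    then obtain k where k: "(k, x, z) \<in> S" "\<i> ^ k * cinner n \<phi> (pauli_apply (0, x, z) \<phi>) = 1"
      using ex_stab_if_expectation_nonzero[OF P] by blast
    have "finite L" using L(1) finite_subset by blast
    then have "pauli_weight (k, x, z) \<le> B * l" using order_trans[OF pauli_weight_le[OF xz] L(2)] by blast
    then have "(\<lambda>b. \<i> ^ k * pauli_apply (0, x, z) v b) = v"
      using fixed[OF k(1)] by (simp add: pauli_apply_phase[of k, symmetric])
    then have "pauli_apply (0, x, z) v = (\<lambda>b. cinner n \<phi> (pauli_apply (0, x, z) \<phi>) * v b)"
      using k(2) by (auto simp: fun_eq_iff algebra_simps intro: mult_left_cancel[THEN iffD1, of "\<i> ^ k"])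
    then show ?thesis using v(2) by (simp add: cinner_scale_right)
  qed
qed

lemma rdm_stab_code:
  assumes "v \<in> D" "cinner n v v = 1" "L \<subseteq> {..<n}" "card L \<le> B * l"
  shows "rdm n L v = rdm n L \<phi>"
  by (rule rdm_eq_if_pauli_expectations_eq[OF assms(3)]) (rule cinner_pauli_apply_stab_code[OF assms(1,2) _ _ assms(3,4)])

lemma circuit_inv_in_stab_code:
  assumes "is_pure_state n \<chi>" "\<And>A. A \<subseteq> {..<n} \<Longrightarrow> card A \<le> l \<Longrightarrow> rdm n A \<chi> = rdm n A \<psi>"
  shows "circuit_apply (circuit_inv U) \<chi> \<in> D"
proof -
  have \<chi>: "is_state n \<chi>" "cinner n \<chi> \<chi> = 1" using assms(1) by (simp_all add: is_pure_state_iff)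
  have "\<chi> \<in> C" by (rule in_local_code[OF \<chi> assms(2)])
  define v where "v = circuit_apply (circuit_inv U) \<chi>"
  have v: "is_state n v" "cinner n v v = 1"
    unfolding v_def using is_state_circuit_apply[OF circuit_inv_gates[OF gates] \<chi>(1)]
      cinner_circuit_apply[OF circuit_inv_gates[OF gates]] \<chi>(2) by simp_all
  have "pauli_apply P v = v" if P: "P \<in> S" "pauli_weight P \<le> B * l" for P
  proof -
    obtain k x z where Pe: "P = (k, x, z)" by (cases P) auto
    have "x \<union> z \<subseteq> {..<n}" "card (x \<union> z) \<le> B * l"
      using stab_is_pauli[OF P(1)] P(2) unfolding Pe by (simp_all add: is_pauli_def pauli_weight_def)
    then have "rdm n (x \<union> z) v = rdm n (x \<union> z) \<phi>"
      unfolding v_def using \<open>\<chi> \<in> C\<close> \<chi>(2) by (intro rdm_circuit_inv_eq_phi)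
    then have "cinner n v (pauli_apply P v) = cinner n \<phi> (pauli_apply P \<phi>)"
      unfolding Pe using \<open>x \<union> z \<subseteq> {..<n}\<close> by (intro cinner_pauli_apply_eq_if_rdm_eq) auto
    then have "cinner n v (pauli_apply P v) = 1" using stab_fixes_phi[OF P(1)] cinner_phi_phi by simp
    then show ?thesis
      using eq_if_cinner_eq_1[OF v(1) is_state_pauli_apply[OF stab_is_pauli[OF P(1)] v(1)] v(2)]
        cinner_pauli_apply[OF stab_is_pauli[OF P(1)]] v(2) by simp
  qed
  then show ?thesis using v(1) unfolding v_def stab_code_def by blast
qed

lemma local_code_subset: "C \<subseteq> circuit_apply U ` D"
proof
  fix w assume "w \<in> C"
  then obtain k :: nat and cs vs where vs: "\<forall>i<k. is_pure_state n (vs i) \<and>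
      (\<forall>A. A \<subseteq> {..<n} \<and> card A \<le> l \<longrightarrow> rdm n A (vs i) = rdm n A \<psi>)"
    and w: "w = (\<lambda>b. \<Sum>i<k. cs i * vs i b)"
    unfolding local_code_def cspan_def by blast
  have "w = circuit_apply U (\<lambda>b. \<Sum>i<k. cs i * circuit_apply (circuit_inv U) (vs i) b)"
    unfolding circuit_apply_sum circuit_apply_inv_right[OF gates] w ..
  moreover have "(\<lambda>b. \<Sum>i<k. cs i * circuit_apply (circuit_inv U) (vs i) b) \<in> D"
    using vs by (intro stab_code_sum allI impI circuit_inv_in_stab_code) auto
  ultimately show "w \<in> circuit_apply U ` D" by blast
qed

lemma stab_code_image_subset: "circuit_apply U ` D \<subseteq> C"
proof
  fix w assume "w \<in> circuit_apply U ` D"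
  then obtain v where v: "v \<in> D" and w: "w = circuit_apply U v" by blast
  have "is_state n v" using v unfolding stab_code_def by auto
  show "w \<in> C" unfolding local_code_def
  proof (rule in_cspan_if_normalized_multiples)
    show "is_state n w" unfolding w by (rule is_state_circuit_apply[OF gates \<open>is_state n v\<close>])
    fix c assume c: "cinner n (\<lambda>b. c * w b) (\<lambda>b. c * w b) = 1"
    have cv: "(\<lambda>b. c * v b) \<in> D" by (rule stab_code_scale[OF v])
    moreover have "cinner n (\<lambda>b. c * v b) (\<lambda>b. c * v b) = 1"
      using c cinner_circuit_apply[OF gates] unfolding w cinner_scale by simp
    ultimately have "circuit_apply U (\<lambda>b. c * v b) \<in> C"
      by (intro circuit_apply_in_local_code rdm_stab_code) (auto simp: stab_code_def)
    then show "(\<lambda>b. c * w b) \<in> cspan {\<phi>. is_pure_state n \<phi> \<and>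
        (\<forall>A. A \<subseteq> {..<n} \<and> card A \<le> l \<longrightarrow> rdm n A \<phi> = rdm n A \<psi>)}"
      unfolding w local_code_def circuit_apply_scale .
  qed
qed

lemma local_code_eq: "C = circuit_apply U ` D"
  using local_code_subset stab_code_image_subset by blast

end

lemma enat_lt_if_lt_sqrt:
  assumes "l \<ge> 1"
    and "case D of enat d \<Rightarrow> real B < sqrt (real d / real l) | \<infinity> \<Rightarrow> True"
  shows "enat (B * (B * l)) < D"
proof (cases D)
  case (enat d)
  then have "(real B)\<^sup>2 < (sqrt (real d / real l))\<^sup>2"
    using assms(2) by (intro power_strict_mono) simp_all
  then have "(real B)\<^sup>2 * real l < real d" using assms(1) by (simp add: field_simps)
  then have "B * (B * l) < d" by (simp add: power2_eq_square mult.assoc flip: of_nat_mult of_nat_less_iff)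
  then show ?thesis using enat by simp
qed simp

theorem theorem4p8:
  fixes n l :: nat and U :: "gate list" and \<phi> \<psi> :: vec
  assumes "is_stabilizer_state n \<phi>"
    and "\<forall>g\<in>set U. is_gate n g"
    and "\<psi> = circuit_apply U \<phi>"
    and "l \<ge> 1"
    and "case d_loc n l \<psi> of
           enat d \<Rightarrow> real (blowup n U) < sqrt (real d / real l)
         | \<infinity> \<Rightarrow> True"
  shows "local_code n l \<psi> = circuit_apply U ` stab_code n (blowup n U * l) \<phi>"
proof -
  interpret stabilizer_state n \<phi> by unfold_locales (rule assms(1))
  have \<psi>: "\<psi> \<in> local_code n l \<psi>" "cinner n \<psi> \<psi> = 1"
    using assms(3) is_state_circuit_apply[OF assms(2) is_state_phi] cinner_circuit_apply[OF assms(2)]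
      cinner_phi_phi unfolding local_code_def by (auto intro!: in_cspan simp: is_pure_state_iff)
  have "rdm n F u = rdm n F \<psi>"
    if "F \<subseteq> {..<n}" "card F \<le> blowup n U * (blowup n U * l)"
      and "u \<in> local_code n l \<psi>" "cinner n u u = 1" for F u
  proof -
    have "enat (card F) < d_loc n l \<psi>"
      using enat_lt_if_lt_sqrt[OF assms(4,5)] that(2) by (metis enat_ord_simps(1) le_less_trans)
    then obtain d where "correctable n (local_code n l \<psi>) d" "card F < d"
      unfolding d_loc_def by (rule ex_correctable_gt)
    then show ?thesis
      using that(1,3,4) \<psi> by (intro correctable_rdm_eq) (auto simp: local_code_def intro: add_in_cspan)
  qed
  then interpret circuit_stabilizer_code n \<phi> U l
    using assms(2,3) by unfold_locales auto
  show ?thesis using local_code_eq assms(3) by simp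
qed

end
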